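(* Under the standing assumptions below, let $E\subset X$ be measurable, $u:E\to[-\infty,\infty]$, $g:E\to[0,\infty]$ measurable, and $\hat g(x)=g(x)(1+d(x,a))^2$ for $x\in E$. Then $g$ is a $p$-weak upper gradient of $u$ in $E$ with respect to $(d,\mu)$ if and only if $\hat g$ is a $p$-weak upper gradient of $u$ in $E$ with respect to $(\hat d,\hat\mu_q)$.
   Context: Standing assumptions: $1\le p<\infty$; $(X,d)$ is a complete unbounded metric space with a positive complete Borel measure $\mu$ with $0<\mu(B)<\infty$ for every ball; $\mu$ is doubling and supports a $p$-Poincaré inequality; for a base point $a$ with $|x|=d(x,a)$ there are $s,C_s>0$ with $\mu(B(a,r))/\mu(B(a,R))\ge C_s(r/R)^s$ for $1\le r\le R<\infty$; $X$ is annularly connected for large radii around $a$; and $q>s$. Sphericalization: $\widehat X=X\cup\{\infty\}$, $d_a(x,y)=\frac{d(x,y)}{(1+|x|)(1+|y|)}$ for $x,y\in X$, $d_a(x,\infty)=d_a(\infty,x)=\frac1{1+|x|}$, $d_a(\infty,\infty)=0$, $\hat d(x,y)=\inf\sum_{j=1}^kd_a(x_{j-1},x_j)$ over finite chains in $\widehat X$; $d\hat\mu_q=d\mu/(1+|x|)^q$ on $X$, $\hat\mu_q(\{\infty\})=0$. A measurable $g\ge0$ is a $p$-weak upper gradient of $u$ in $E$ (w.r.t. a metric and measure) if $|u(\gamma(0))-u(\gamma(1))|\le\int_\gamma g\,ds$ for all nonconstant rectifiable curves $\gamma:[0,1]\to E$ outside a family of zero $p$-modulus; a curve family has zero $p$-modulus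 if some nonnegative Borel $\rho\in L^p$ has $\int_\gamma\rho\,ds=\infty$ on each of its curves. *)

theory Defs
  imports "HOL-Analysis.Analysis"
begin

definition metric_on :: "('a \<Rightarrow> 'a \<Rightarrow> real) \<Rightarrow> bool" where
  "metric_on d \<longleftrightarrow>
     (\<forall>x y. 0 \<le> d x y) \<and> (\<forall>x y. d x y = 0 \<longleftrightarrow> x = y) \<and>
     (\<forall>x y. d x y = d y x) \<and> (\<forall>x y z. d x z \<le> d x y + d y z)"

definition metric_complete :: "('a \<Rightarrow> 'a \<Rightarrow> real) \<Rightarrow> bool" where
  "metric_complete d \<longleftrightarrow>
     (\<forall>f :: nat \<Rightarrow> 'a.
        (\<forall>e>0. \<exists>N. \<forall>m\<ge>N. \<forall>n\<ge>N. d (f m) (f n) < e) \<longrightarrow>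
        (\<exists>x. (\<lambda>n. d (f n) x) \<longlonglongrightarrow> 0))"

definition dball :: "('a \<Rightarrow> 'a \<Rightarrow> real) \<Rightarrow> 'a \<Rightarrow> real \<Rightarrow> 'a set" where
  "dball d x r = {y. d x y < r}"

definition d_open :: "('a \<Rightarrow> 'a \<Rightarrow> real) \<Rightarrow> 'a set \<Rightarrow> bool" where
  "d_open d U \<longleftrightarrow> (\<forall>x\<in>U. \<exists>r>0. dball d x r \<subseteq> U)"

definition d_borel :: "('a \<Rightarrow> 'a \<Rightarrow> real) \<Rightarrow> 'a measure" where
  "d_borel d = sigma UNIV {U. d_open d U}"

definition epowr :: "ennreal \<Rightarrow> real \<Rightarrow> ennreal" where
  "epowr x p = (if x = \<infinity> then \<infinity> else ennreal (enn2real x powr p))"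

definition d_curve :: "('a \<Rightarrow> 'a \<Rightarrow> real) \<Rightarrow> (real \<Rightarrow> 'a) \<Rightarrow> bool" where
  "d_curve d \<gamma> \<longleftrightarrow>
     (\<forall>t\<in>{0..1}. \<forall>e>0. \<exists>\<delta>>0. \<forall>s\<in>{0..1}. \<bar>s - t\<bar> < \<delta> \<longrightarrow> d (\<gamma> s) (\<gamma> t) < e)"

definition curve_length :: "('a \<Rightarrow> 'a \<Rightarrow> real) \<Rightarrow> (real \<Rightarrow> 'a) \<Rightarrow> real \<Rightarrow> real \<Rightarrow> ennreal" where
  "curve_length d \<gamma> a b =
     (SUP nt \<in> {(n, t :: nat \<Rightarrow> real). t 0 = a \<and> t n = b \<and> (\<forall>i<n. t i \<le> t (Suc i))}.
        (\<Sum>i<fst nt. ennreal (d (\<gamma> (snd nt i)) (\<gamma> (snd nt (Suc i))))))"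

definition d_rectifiable :: "('a \<Rightarrow> 'a \<Rightarrow> real) \<Rightarrow> (real \<Rightarrow> 'a) \<Rightarrow> bool" where
  "d_rectifiable d \<gamma> \<longleftrightarrow> d_curve d \<gamma> \<and> curve_length d \<gamma> 0 1 < \<infinity>"

definition nonconstant_curve :: "(real \<Rightarrow> 'a) \<Rightarrow> bool" where
  "nonconstant_curve \<gamma> \<longleftrightarrow> (\<exists>s\<in>{0..1}. \<exists>t\<in>{0..1}. \<gamma> s \<noteq> \<gamma> t)"

definition arclen :: "('a \<Rightarrow> 'a \<Rightarrow> real) \<Rightarrow> (real \<Rightarrow> 'a) \<Rightarrow> real \<Rightarrow> real" where
  "arclen d \<gamma> t = enn2real (curve_length d \<gamma> 0 (max 0 (min 1 t)))"

text \<open>Line integral of a nonnegative g along a rectifiable curve gamma with respect to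
  arc length, i.e. the Lebesgue--Stieltjes integral of g o gamma with respect to ds_gamma.\<close>
definition line_int :: "('a \<Rightarrow> 'a \<Rightarrow> real) \<Rightarrow> ('a \<Rightarrow> ennreal) \<Rightarrow> (real \<Rightarrow> 'a) \<Rightarrow> ennreal" where
  "line_int d g \<gamma> = (\<integral>\<^sup>+ t. g (\<gamma> t) * indicator {0..1} t \<partial>interval_measure (arclen d \<gamma>))"

definition zero_p_modulus ::
    "('a \<Rightarrow> 'a \<Rightarrow> real) \<Rightarrow> 'a measure \<Rightarrow> real \<Rightarrow> (real \<Rightarrow> 'a) set \<Rightarrow> bool" where
  "zero_p_modulus d M p \<Gamma> \<longleftrightarrow>
     (\<exists>\<rho> :: 'a \<Rightarrow> ennreal. \<rho> \<in> borel_measurable (d_borel d) \<and>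
        (\<integral>\<^sup>+ x. epowr (\<rho> x) p \<partial>M) < \<infinity> \<and> (\<forall>\<gamma>\<in>\<Gamma>. line_int d \<rho> \<gamma> = \<infinity>))"

definition ug_ineq :: "ereal \<Rightarrow> ereal \<Rightarrow> ennreal \<Rightarrow> bool" where
  "ug_ineq ux uy I \<longleftrightarrow>
     (if \<bar>ux\<bar> = \<infinity> \<or> \<bar>uy\<bar> = \<infinity> then I = \<infinity>
      else ennreal \<bar>real_of_ereal ux - real_of_ereal uy\<bar> \<le> I)"

definition p_weak_upper_gradient ::
    "('a \<Rightarrow> 'a \<Rightarrow> real) \<Rightarrow> 'a measure \<Rightarrow> real \<Rightarrow> ('a \<Rightarrow> ereal) \<Rightarrow> ('a \<Rightarrow> ennreal) \<Rightarrow> 'a set \<Rightarrow> bool"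
  where
  "p_weak_upper_gradient d M p u g E \<longleftrightarrow>
     g \<in> borel_measurable (restrict_space M E) \<and>
     (\<exists>\<Gamma>. zero_p_modulus d M p \<Gamma> \<and>
        (\<forall>\<gamma>. d_rectifiable d \<gamma> \<and> nonconstant_curve \<gamma> \<and> \<gamma> ` {0..1} \<subseteq> E \<and> \<gamma> \<notin> \<Gamma> \<longrightarrow>
               ug_ineq (u (\<gamma> 0)) (u (\<gamma> 1)) (line_int d g \<gamma>)))"

definition upper_gradient ::
    "('a \<Rightarrow> 'a \<Rightarrow> real) \<Rightarrow> ('a \<Rightarrow> real) \<Rightarrow> ('a \<Rightarrow> ennreal) \<Rightarrow> bool" where
  "upper_gradient d u g \<longleftrightarrow>
     g \<in> borel_measurable (d_borel d) \<and>
     (\<forall>\<gamma>. d_rectifiable d \<gamma> \<and> nonconstant_curve \<gamma> \<longrightarrow>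
            ennreal \<bar>u (\<gamma> 0) - u (\<gamma> 1)\<bar> \<le> line_int d g \<gamma>)"

definition unbounded_metric :: "('a \<Rightarrow> 'a \<Rightarrow> real) \<Rightarrow> bool" where
  "unbounded_metric d \<longleftrightarrow> (\<forall>x R. \<exists>y. d x y > R)"

definition good_borel_measure :: "('a \<Rightarrow> 'a \<Rightarrow> real) \<Rightarrow> 'a measure \<Rightarrow> bool" where
  "good_borel_measure d \<mu> \<longleftrightarrow>
     space \<mu> = UNIV \<and> sets (d_borel d) \<subseteq> sets \<mu> \<and> complete_measure \<mu> \<and>
     (\<forall>x r. r > 0 \<longrightarrow> 0 < emeasure \<mu> (dball d x r) \<and> emeasure \<mu> (dball d x r) < \<infinity>)"

definition doubling :: "('a \<Rightarrow> 'a \<Rightarrow> real) \<Rightarrow> 'a measure \<Rightarrow> bool" where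
  "doubling d \<mu> \<longleftrightarrow>
     (\<exists>C. \<forall>x r. r > 0 \<longrightarrow> emeasure \<mu> (dball d x (2 * r)) \<le> ennreal C * emeasure \<mu> (dball d x r))"

definition poincare :: "('a \<Rightarrow> 'a \<Rightarrow> real) \<Rightarrow> 'a measure \<Rightarrow> real \<Rightarrow> bool" where
  "poincare d \<mu> p \<longleftrightarrow>
     (\<exists>C>0. \<exists>lam\<ge>1. \<forall>(u :: 'a \<Rightarrow> real) (g :: 'a \<Rightarrow> ennreal).
        (\<forall>x r. r > 0 \<longrightarrow> set_integrable \<mu> (dball d x r) u) \<and> upper_gradient d u g \<longrightarrow>
        (\<forall>x r. r > 0 \<longrightarrow>
           (let B = dball d x r;
                uB = (\<integral>y\<in>B. u y \<partial>\<mu>) / measure \<mu> B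
            in ennreal ((\<integral>y\<in>B. \<bar>u y - uB\<bar> \<partial>\<mu>) / measure \<mu> B)
               \<le> ennreal (C * r) *
                 epowr ((\<integral>\<^sup>+ y\<in>dball d x (lam * r). epowr (g y) p \<partial>\<mu>)
                         / emeasure \<mu> (dball d x (lam * r))) (1 / p))))"

definition lower_mass_bound ::
    "('a \<Rightarrow> 'a \<Rightarrow> real) \<Rightarrow> 'a measure \<Rightarrow> 'a \<Rightarrow> real \<Rightarrow> real \<Rightarrow> bool" where
  "lower_mass_bound d \<mu> a s Cs \<longleftrightarrow>
     (\<forall>r R. 1 \<le> r \<and> r \<le> R \<longrightarrow>
        measure \<mu> (dball d a r) / measure \<mu> (dball d a R) \<ge> Cs * (r / R) powr s)"

definition annularly_connected_large ::
    "('a \<Rightarrow> 'a \<Rightarrow> real) \<Rightarrow> 'a \<Rightarrow> bool" where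
  "annularly_connected_large d a \<longleftrightarrow>
     (\<exists>\<Lambda>\<ge>1. \<exists>R0>0. \<forall>r\<ge>R0. \<forall>x y.
        x \<in> dball d a (2 * r) - dball d a r \<and> y \<in> dball d a (2 * r) - dball d a r \<longrightarrow>
        (\<exists>\<gamma>. d_curve d \<gamma> \<and> \<gamma> 0 = x \<and> \<gamma> 1 = y \<and>
             \<gamma> ` {0..1} \<subseteq> dball d a (\<Lambda> * r) - dball d a (r / \<Lambda>)))"

section \<open>Sphericalization; None plays the role of the point \<infinity>\<close>

fun d_a :: "('a \<Rightarrow> 'a \<Rightarrow> real) \<Rightarrow> 'a \<Rightarrow> 'a option \<Rightarrow> 'a option \<Rightarrow> real" where
  "d_a d a (Some x) (Some y) = d x y / ((1 + d x a) * (1 + d y a))"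
| "d_a d a (Some x) None = 1 / (1 + d x a)"
| "d_a d a None (Some y) = 1 / (1 + d y a)"
| "d_a d a None None = 0"

definition hat_d :: "('a \<Rightarrow> 'a \<Rightarrow> real) \<Rightarrow> 'a \<Rightarrow> 'a option \<Rightarrow> 'a option \<Rightarrow> real" where
  "hat_d d a x y =
     (INF xs \<in> {xs. xs \<noteq> [] \<and> hd xs = x \<and> last xs = y}.
        (\<Sum>j<length xs - 1. d_a d a (xs ! j) (xs ! Suc j)))"

definition hat_mu :: "('a \<Rightarrow> 'a \<Rightarrow> real) \<Rightarrow> 'a measure \<Rightarrow> 'a \<Rightarrow> real \<Rightarrow> 'a option measure" where
  "hat_mu d \<mu> a q =
     measure_of UNIV {A. Some -` A \<in> sets \<mu>}
       (\<lambda>A. \<integral>\<^sup>+ x\<in>Some -` A. ennreal (1 / (1 + d x a) powr q) \<partial>\<mu>)"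

end

theory Submission
  imports Defs
begin

text \<open>The sphericalized metric is infinitesimally conformal to d with factor (1 + |x|)^-2:
  on a small d-ball around x, hat_d is comparable to d / (1 + |x|)^2 up to a factor 1 + O(r),
  because a chain leaving the ball (or passing through \<infinity>) costs at least a fixed amount.
  Hence a curve in X is d-rectifiable iff it is hat_d-rectifiable, and its hat_d arc-length
  measure has density (1 + |x|)^-2 with respect to its d arc-length measure; so the
  line integral of g (1 + |x|)^2 in the new geometry equals that of g in the old one.
  A test function \<rho> for a curve family of zero p-modulus corresponds to \<rho> (1 + |x|)^(q/p):
  the integrals of the p-th powers against \<mu> and hat_mu_q agree, and the remaining factor
  (1 + |x|)^(q/p - 2) is bounded above and below along each rectifiable curve, so line integrals
  remain infinite. Curves through \<infinity> never lie in E.\<close>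

section \<open>Curve length in a pseudometric\<close>

definition partitions :: "real \<Rightarrow> real \<Rightarrow> (nat \<times> (nat \<Rightarrow> real)) set" where
  "partitions a b = {(n, t). t 0 = a \<and> t n = b \<and> (\<forall>i<n. t i \<le> t (Suc i))}"

definition partition_sum ::
    "('a \<Rightarrow> 'a \<Rightarrow> real) \<Rightarrow> (real \<Rightarrow> 'a) \<Rightarrow> nat \<times> (nat \<Rightarrow> real) \<Rightarrow> ennreal" where
  "partition_sum dd \<gamma> P = (\<Sum>i<fst P. ennreal (dd (\<gamma> (snd P i)) (\<gamma> (snd P (Suc i)))))"

lemma curve_length_eq_SUP: "curve_length dd \<gamma> a b = (SUP P\<in>partitions a b. partition_sum dd \<gamma> P)"
  unfolding curve_length_def partitions_def partition_sum_def by simp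

lemma sum_lessThan_add:
  fixes f :: "nat \<Rightarrow> 'b::comm_monoid_add"
  shows "(\<Sum>i<m + n. f i) = (\<Sum>i<m. f i) + (\<Sum>i<n. f (m + i))"
  by (induction n) (auto simp: add.assoc)

lemma partitionsI:
  "t 0 = a \<Longrightarrow> t n = b \<Longrightarrow> (\<And>i. i < n \<Longrightarrow> t i \<le> t (Suc i)) \<Longrightarrow> (n, t) \<in> partitions a b"
  unfolding partitions_def by auto

lemma partitions_mono:
  assumes "(n, t) \<in> partitions a b" "i \<le> j" "j \<le> n"
  shows "t i \<le> t j"
  using assms(2,3)
proof (induction j)
  case (Suc j)
  have "t j \<le> t (Suc j)" using assms(1) Suc.prems unfolding partitions_def by auto
  then show ?case using Suc by (cases "i = Suc j") auto
qed simp

lemma partitions_bounds: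
  assumes "(n, t) \<in> partitions a b" "i \<le> n"
  shows "a \<le> t i" "t i \<le> b"
  using partitions_mono[OF assms(1), of 0 i] partitions_mono[OF assms(1), of i n] assms
  unfolding partitions_def by auto

lemma trivial_partition: "a \<le> b \<Longrightarrow> (1, \<lambda>i. if i = 0 then a else b) \<in> partitions a b"
  unfolding partitions_def by auto

lemma partitions_nonempty: "a \<le> b \<Longrightarrow> partitions a b \<noteq> {}"
  using trivial_partition by blast

lemma partition_step_bounds:
  assumes "(n, t) \<in> partitions a b" "i < n"
  shows "a \<le> t i" "t i \<le> t (Suc i)" "t (Suc i) \<le> b"
  using partitions_bounds[OF assms(1)] partitions_mono[OF assms(1), of i "Suc i"] assms(2) by auto

lemma curve_length_le_cmult:
  assumes "\<And>s t. a \<le> s \<Longrightarrow> s \<le> t \<Longrightarrow> t \<le> b \<Longrightarrow>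
             ennreal (d1 (\<gamma>1 s) (\<gamma>1 t)) \<le> c * ennreal (d2 (\<gamma>2 s) (\<gamma>2 t))"
  shows "curve_length d1 \<gamma>1 a b \<le> c * curve_length d2 \<gamma>2 a b"
  unfolding curve_length_eq_SUP SUP_mult_left_ennreal
proof (rule SUP_mono)
  fix P assume P: "P \<in> partitions a b"
  obtain n t where nt: "P = (n, t)" by (cases P)
  have "partition_sum d1 \<gamma>1 P \<le> c * partition_sum d2 \<gamma>2 P"
    unfolding partition_sum_def nt sum_distrib_left fst_conv snd_conv
    using partition_step_bounds[of n t a b] P nt by (intro sum_mono assms) auto
  then show "\<exists>Q\<in>partitions a b. partition_sum d1 \<gamma>1 P \<le> c * partition_sum d2 \<gamma>2 Q"
    using P by blast
qed

lemma cmult_curve_length_le: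
  assumes "\<And>s t. a \<le> s \<Longrightarrow> s \<le> t \<Longrightarrow> t \<le> b \<Longrightarrow>
             c * ennreal (d1 (\<gamma>1 s) (\<gamma>1 t)) \<le> ennreal (d2 (\<gamma>2 s) (\<gamma>2 t))"
  shows "c * curve_length d1 \<gamma>1 a b \<le> curve_length d2 \<gamma>2 a b"
  unfolding curve_length_eq_SUP SUP_mult_left_ennreal
proof (rule SUP_mono)
  fix P assume P: "P \<in> partitions a b"
  obtain n t where nt: "P = (n, t)" by (cases P)
  have "c * partition_sum d1 \<gamma>1 P \<le> partition_sum d2 \<gamma>2 P"
    unfolding partition_sum_def nt sum_distrib_left fst_conv snd_conv
    using partition_step_bounds[of n t a b] P nt by (intro sum_mono assms) auto
  then show "\<exists>Q\<in>partitions a b. c * partition_sum d1 \<gamma>1 P \<le> partition_sum d2 \<gamma>2 Q"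
    using P by blast
qed

locale pseudometric =
  fixes dd :: "'a \<Rightarrow> 'a \<Rightarrow> real"
  assumes nonneg: "0 \<le> dd x y"
    and refl: "dd x x = 0"
    and sym: "dd x y = dd y x"
    and triangle: "dd x z \<le> dd x y + dd y z"
begin

lemma dist_le_curve_length:
  assumes "a \<le> b"
  shows "ennreal (dd (\<gamma> a) (\<gamma> b)) \<le> curve_length dd \<gamma> a b"
proof -
  have "partition_sum dd \<gamma> (1, \<lambda>i. if i = 0 then a else b) = ennreal (dd (\<gamma> a) (\<gamma> b))"
    unfolding partition_sum_def by simp
  then show ?thesis unfolding curve_length_eq_SUP
    by (metis SUP_upper assms trivial_partition)
qed

lemma curve_length_point: "curve_length dd \<gamma> a a = 0"
proof -
  have "partition_sum dd \<gamma> P = 0" if P: "P \<in> partitions a a" for P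
  proof -
    obtain n t where nt: "P = (n, t)" by (cases P)
    have "\<And>i. i \<le> n \<Longrightarrow> t i = a" using partitions_bounds[of n t a a] P nt by force
    then show ?thesis unfolding partition_sum_def nt by (simp add: refl)
  qed
  then show ?thesis unfolding curve_length_eq_SUP using partitions_nonempty[of a a] by simp
qed

lemma partition_append:
  assumes P1: "(n1, t1) \<in> partitions a b" and P2: "(n2, t2) \<in> partitions b c"
  defines "t \<equiv> \<lambda>i. if i \<le> n1 then t1 i else t2 (i - n1)"
  shows "(n1 + n2, t) \<in> partitions a c"
    and "partition_sum dd \<gamma> (n1 + n2, t) = partition_sum dd \<gamma> (n1, t1) + partition_sum dd \<gamma> (n2, t2)"
proof -
  have t1: "t1 0 = a" "t1 n1 = b" "\<And>i. i < n1 \<Longrightarrow> t1 i \<le> t1 (Suc i)"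
    using P1 unfolding partitions_def by auto
  have t2: "t2 0 = b" "t2 n2 = c" "\<And>i. i < n2 \<Longrightarrow> t2 i \<le> t2 (Suc i)"
    using P2 unfolding partitions_def by auto
  show "(n1 + n2, t) \<in> partitions a c"
  proof (rule partitionsI)
    show "t 0 = a" "t (n1 + n2) = c" unfolding t_def using t1 t2 by (cases "n2 = 0"; simp)+
  next
    fix i assume i: "i < n1 + n2"
    consider "i < n1" | "i = n1" | "n1 < i" by linarith
    then show "t i \<le> t (Suc i)"
    proof cases
      case 3
      then have "Suc i - n1 = Suc (i - n1)" by simp
      then show ?thesis unfolding t_def using 3 i t2(3)[of "i - n1"] by simp
    qed (use t1 t2 i t2(3)[of 0] in \<open>auto simp: t_def\<close>)
  qed
  show "partition_sum dd \<gamma> (n1 + n2, t) = partition_sum dd \<gamma> (n1, t1) + partition_sum dd \<gamma> (n2, t2)"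
    unfolding partition_sum_def fst_conv snd_conv sum_lessThan_add
    using t1(2) t2(1) by (intro arg_cong2[where f="(+)"] sum.cong) (auto simp: t_def Suc_le_eq)
qed

lemma partition_split:
  assumes P: "(n, t) \<in> partitions a c" and ab: "a \<le> b" and bc: "b \<le> c" and n: "0 < n"
  obtains k where "k < n" "\<forall>i\<le>k. t i \<le> b"
    "(Suc k, \<lambda>i. if i \<le> k then t i else b) \<in> partitions a b"
    "(n - k, \<lambda>i. if i = 0 then b else t (k + i)) \<in> partitions b c"
    "partition_sum dd \<gamma> (n, t) \<le> partition_sum dd \<gamma> (Suc k, \<lambda>i. if i \<le> k then t i else b)
        + partition_sum dd \<gamma> (n - k, \<lambda>i. if i = 0 then b else t (k + i))"
proof -
  have t: "t 0 = a" "t n = c" "\<And>i. i < n \<Longrightarrow> t i \<le> t (Suc i)"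
    using P unfolding partitions_def by auto
  have ex: "\<exists>i. i < n \<and> b \<le> t (Suc i)" using n t(2) bc by (intro exI[of _ "n - 1"]) auto
  define k where "k = (LEAST i. i < n \<and> b \<le> t (Suc i))"
  have k: "k < n" "b \<le> t (Suc k)" using LeastI_ex[OF ex] unfolding k_def by auto
  have before_k: "t (Suc i) < b" if "i < k" for i
    using not_less_Least[OF that[unfolded k_def]] that k(1) by simp
  have tk: "t k \<le> b" using t(1) ab before_k[of "k - 1"] by (cases k) auto
  have below_b: "\<forall>i\<le>k. t i \<le> b" using partitions_mono[OF P, of _ k] k(1) tk by force
  let ?t1 = "\<lambda>i. if i \<le> k then t i else b"
  let ?t2 = "\<lambda>i. if i = 0 then b else t (k + i)"
  have P1: "(Suc k, ?t1) \<in> partitions a b"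
    by (rule partitionsI) (use t below_b k(1) in auto)
  have P2: "(n - k, ?t2) \<in> partitions b c"
    by (rule partitionsI) (use t k in auto)
  define f where "f i = ennreal (dd (\<gamma> (t i)) (\<gamma> (t (Suc i))))" for i
  have nk: "n = Suc k + (n - Suc k)" "n - k = Suc (n - Suc k)" using k(1) by simp_all
  have sum1: "partition_sum dd \<gamma> (Suc k, ?t1) = (\<Sum>i<k. f i) + ennreal (dd (\<gamma> (t k)) (\<gamma> b))"
    unfolding partition_sum_def f_def fst_conv snd_conv sum.lessThan_Suc by (auto intro: sum.cong)
  have sum2: "partition_sum dd \<gamma> (n - k, ?t2)
      = ennreal (dd (\<gamma> b) (\<gamma> (t (Suc k)))) + (\<Sum>i<n - Suc k. f (Suc k + i))"
    unfolding partition_sum_def f_def fst_conv snd_conv nk(2) sum.lessThan_Suc_shift by simp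
  have "partition_sum dd \<gamma> (n, t) = (\<Sum>i<k. f i) + f k + (\<Sum>i<n - Suc k. f (Suc k + i))"
    unfolding partition_sum_def f_def fst_conv snd_conv
    by (subst nk(1)) (simp only: sum_lessThan_add sum.lessThan_Suc)
  also have "\<dots> \<le> (\<Sum>i<k. f i) + (ennreal (dd (\<gamma> (t k)) (\<gamma> b)) + ennreal (dd (\<gamma> b) (\<gamma> (t (Suc k)))))
      + (\<Sum>i<n - Suc k. f (Suc k + i))"
    unfolding f_def ennreal_plus[OF nonneg nonneg, symmetric]
    by (intro add_mono order_refl ennreal_leI triangle)
  also have "\<dots> = partition_sum dd \<gamma> (Suc k, ?t1) + partition_sum dd \<gamma> (n - k, ?t2)"
    unfolding sum1 sum2 by (simp add: add.assoc)
  finally show ?thesis using that k below_b P1 P2 by blast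
qed

lemma curve_length_add:
  assumes ab: "a \<le> b" and bc: "b \<le> c"
  shows "curve_length dd \<gamma> a c = curve_length dd \<gamma> a b + curve_length dd \<gamma> b c"
proof (rule antisym)
  show "curve_length dd \<gamma> a c \<le> curve_length dd \<gamma> a b + curve_length dd \<gamma> b c"
    unfolding curve_length_eq_SUP
  proof (rule SUP_least)
    fix P assume P: "P \<in> partitions a c"
    obtain n t where nt: "P = (n, t)" by (cases P)
    show "partition_sum dd \<gamma> P \<le> (SUP P\<in>partitions a b. partition_sum dd \<gamma> P)
                                   + (SUP P\<in>partitions b c. partition_sum dd \<gamma> P)"
    proof (cases "n = 0")
      case True
      then show ?thesis unfolding nt partition_sum_def by simp
    next
      case False
      then obtain k where "(Suc k, \<lambda>i. if i \<le> k then t i else b) \<in> partitions a b"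
        "(n - k, \<lambda>i. if i = 0 then b else t (k + i)) \<in> partitions b c"
        "partition_sum dd \<gamma> (n, t) \<le> partition_sum dd \<gamma> (Suc k, \<lambda>i. if i \<le> k then t i else b)
           + partition_sum dd \<gamma> (n - k, \<lambda>i. if i = 0 then b else t (k + i))"
        using partition_split[OF P[unfolded nt] ab bc] by blast
      then show ?thesis unfolding nt by (meson SUP_upper add_mono order_trans)
    qed
  qed
next
  have "(SUP P\<in>partitions a b. partition_sum dd \<gamma> P) + (SUP Q\<in>partitions b c. partition_sum dd \<gamma> Q)
      = (SUP P\<in>partitions a b. SUP Q\<in>partitions b c. partition_sum dd \<gamma> P + partition_sum dd \<gamma> Q)"
    using partitions_nonempty[OF ab] partitions_nonempty[OF bc]
    by (simp add: ennreal_SUP_add_left[symmetric] ennreal_SUP_add_right SUP_commute[of _ "partitions b c"])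
  also have "\<dots> \<le> (SUP P\<in>partitions a c. partition_sum dd \<gamma> P)"
  proof (intro SUP_least)
    fix P Q assume PQ: "P \<in> partitions a b" "Q \<in> partitions b c"
    obtain n1 t1 n2 t2 where nt: "P = (n1, t1)" "Q = (n2, t2)" by (cases P, cases Q)
    show "partition_sum dd \<gamma> P + partition_sum dd \<gamma> Q \<le> (SUP P\<in>partitions a c. partition_sum dd \<gamma> P)"
      using partition_append(2)[OF PQ[unfolded nt]] SUP_upper[where f="partition_sum dd \<gamma>", OF partition_append(1)[OF PQ[unfolded nt]]]
      unfolding nt by simp
  qed
  finally show "curve_length dd \<gamma> a b + curve_length dd \<gamma> b c \<le> curve_length dd \<gamma> a c"
    unfolding curve_length_eq_SUP .
qed

lemma curve_length_mono:
  assumes "a \<le> b" "b \<le> c" "c \<le> e"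
  shows "curve_length dd \<gamma> b c \<le> curve_length dd \<gamma> a e"
  using curve_length_add[of a b e \<gamma>] curve_length_add[of b c e \<gamma>] assms
  by (metis add.commute add_increasing2 le_iff_add order_trans zero_le)

lemma curve_length_finite:
  assumes "curve_length dd \<gamma> 0 1 < \<infinity>" and "0 \<le> a" "a \<le> b" "b \<le> 1"
  shows "curve_length dd \<gamma> a b < \<infinity>"
  using curve_length_mono[of 0 a b 1 \<gamma>] assms by (simp add: le_less_trans)

lemma uniformly_continuous_curve:
  assumes cur: "d_curve dd \<gamma>" and e: "e > 0"
  obtains \<eta> where "\<eta> > 0" "\<And>s t. s \<in> {0..1} \<Longrightarrow> t \<in> {0..1} \<Longrightarrow> \<bar>s - t\<bar> < \<eta> \<Longrightarrow> dd (\<gamma> s) (\<gamma> t) < e"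
proof (rule ccontr)
  assume "\<not> thesis"
  then have "\<forall>n::nat. \<exists>s t. s \<in> {0..1} \<and> t \<in> {0..1} \<and> \<bar>s - t\<bar> < 1 / real (Suc n) \<and> e \<le> dd (\<gamma> s) (\<gamma> t)"
    using that by (metis not_less of_nat_0_less_iff zero_less_Suc zero_less_divide_1_iff)
  then obtain S T where ST: "\<And>n. S n \<in> {0..1}" "\<And>n. T n \<in> {0..1}"
    "\<And>n. \<bar>S n - T n\<bar> < 1 / real (Suc n)" "\<And>n. e \<le> dd (\<gamma> (S n)) (\<gamma> (T n))"
    by metis
  have "seq_compact {0..1::real}" by (rule compact_imp_seq_compact) simp
  then obtain l r where l: "l \<in> {0..1}" "strict_mono r" "(S \<circ> r) \<longlonglongrightarrow> l"
    using ST(1) unfolding seq_compact_def by metis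
  have "(\<lambda>n. T (r n) - S (r n)) \<longlonglongrightarrow> 0"
  proof (rule LIMSEQ_norm_0)
    fix n
    have "1 / real (Suc (r n)) \<le> 1 / real (Suc n)"
      using seq_suble[OF l(2), of n] by (intro divide_left_mono) auto
    then show "norm (T (r n) - S (r n)) < 1 / real (Suc n)"
      using ST(3)[of "r n"] by (simp add: abs_minus_commute)
  qed
  from tendsto_add[OF l(3)[unfolded o_def] this] have Tl: "(T \<circ> r) \<longlonglongrightarrow> l"
    by (simp add: o_def)
  obtain \<eta> where \<eta>: "\<eta> > 0" "\<And>s. s \<in> {0..1} \<Longrightarrow> \<bar>s - l\<bar> < \<eta> \<Longrightarrow> dd (\<gamma> s) (\<gamma> l) < e/2"
    using cur l(1) e unfolding d_curve_def by (meson half_gt_zero)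
  have "eventually (\<lambda>n. dist ((S \<circ> r) n) l < \<eta> \<and> dist ((T \<circ> r) n) l < \<eta>) sequentially"
    using tendstoD[OF l(3) \<eta>(1)] tendstoD[OF Tl \<eta>(1)] by (rule eventually_conj)
  then obtain n where n: "\<bar>S (r n) - l\<bar> < \<eta>" "\<bar>T (r n) - l\<bar> < \<eta>"
    unfolding eventually_sequentially dist_real_def by auto
  have "dd (\<gamma> (S (r n))) (\<gamma> (T (r n))) \<le> dd (\<gamma> (S (r n))) (\<gamma> l) + dd (\<gamma> (T (r n))) (\<gamma> l)"
    using triangle[where x="\<gamma> (S (r n))" and y="\<gamma> l" and z="\<gamma> (T (r n))"] sym[of "\<gamma> l"] by simp
  also have "\<dots> < e" using \<eta>(2)[OF ST(1) n(1)] \<eta>(2)[OF ST(2) n(2)] by simp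
  finally show False using ST(4)[of "r n"] by simp
qed

lemma partition_sum_le_first_gap:
  assumes P: "(n, t) \<in> partitions x c" and b: "x \<le> b" "b \<le> c"
    and gap: "\<And>i. i \<le> n \<Longrightarrow> x < t i \<Longrightarrow> b < t i"
  shows "partition_sum dd \<gamma> (n, t) \<le> ennreal (dd (\<gamma> x) (\<gamma> b)) + curve_length dd \<gamma> b c"
proof (cases "n = 0")
  case True
  then show ?thesis by (simp add: partition_sum_def)
next
  case False
  then obtain k where k: "k < n" "\<forall>i\<le>k. t i \<le> b"
    "(n - k, \<lambda>i. if i = 0 then b else t (k + i)) \<in> partitions b c"
    "partition_sum dd \<gamma> (n, t) \<le> partition_sum dd \<gamma> (Suc k, \<lambda>i. if i \<le> k then t i else b)
      + partition_sum dd \<gamma> (n - k, \<lambda>i. if i = 0 then b else t (k + i))"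
    using partition_split[OF P b] by blast
  have "t i = x" if "i \<le> k" for i
    using partitions_bounds(1)[OF P, of i] gap[of i] k(1,2) that by force
  then have "partition_sum dd \<gamma> (Suc k, \<lambda>i. if i \<le> k then t i else b) = ennreal (dd (\<gamma> x) (\<gamma> b))"
    unfolding partition_sum_def by (simp add: refl)
  moreover have "partition_sum dd \<gamma> (n - k, \<lambda>i. if i = 0 then b else t (k + i)) \<le> curve_length dd \<gamma> b c"
    unfolding curve_length_eq_SUP by (rule SUP_upper[OF k(3)])
  ultimately show ?thesis using k(4) by (metis add_left_mono order.trans)
qed

text \<open>Approximate the length of [x, 1] by a partition; moving its first point right of x
  to a point b close to x shows that the length of [x, b] is small.\<close>
lemma curve_length_right_small:
  assumes cur: "d_curve dd \<gamma>" and fin: "curve_length dd \<gamma> 0 1 < \<infinity>"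
    and x: "0 \<le> x" "x < 1" and \<epsilon>: "\<epsilon> > 0"
  obtains h where "h > 0" "x + h \<le> 1" "curve_length dd \<gamma> x (x + h) < ennreal \<epsilon>"
proof -
  define L where "L = enn2real (curve_length dd \<gamma> x 1)"
  have L: "curve_length dd \<gamma> x 1 = ennreal L" "0 \<le> L"
    unfolding L_def using curve_length_finite[OF fin] x by simp_all
  show ?thesis
  proof (cases "L = 0")
    case True
    then show ?thesis using that[of "1 - x"] L x \<epsilon> by simp
  next
    case False
    have "ennreal (max 0 (L - \<epsilon>/2)) < curve_length dd \<gamma> x 1"
      unfolding L using False L(2) \<epsilon> by (intro ennreal_lessI) auto
    then obtain n t where P: "(n, t) \<in> partitions x 1"
      and approx: "ennreal (max 0 (L - \<epsilon>/2)) < partition_sum dd \<gamma> (n, t)"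
      unfolding curve_length_eq_SUP less_SUP_iff by auto
    have t: "t 0 = x" "t n = 1" using P unfolding partitions_def by auto
    define T where "T = t ` {i. i \<le> n \<and> x < t i}"
    have "finite T" "T \<noteq> {}" unfolding T_def using t x by auto
    define t1 where "t1 = Min T"
    have t1: "x < t1" "t1 \<le> 1" "\<And>i. i \<le> n \<Longrightarrow> x < t i \<Longrightarrow> t1 \<le> t i"
      using \<open>finite T\<close> \<open>T \<noteq> {}\<close> t x unfolding t1_def T_def by auto
    have "\<forall>e>0. \<exists>\<delta>>0. \<forall>s\<in>{0..1}. \<bar>s - x\<bar> < \<delta> \<longrightarrow> dd (\<gamma> s) (\<gamma> x) < e"
      using cur x unfolding d_curve_def by auto
    then obtain \<eta> where \<eta>: "\<eta> > 0" "\<And>s. s \<in> {0..1} \<Longrightarrow> \<bar>s - x\<bar> < \<eta> \<Longrightarrow> dd (\<gamma> s) (\<gamma> x) < \<epsilon>/2"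
      using \<epsilon> by (meson half_gt_zero)
    define h where "h = min (\<eta>/2) ((t1 - x)/2)"
    define b where "b = x + h"
    have hle: "h \<le> \<eta>/2" "h \<le> (t1 - x)/2" unfolding h_def by (rule min.cobounded1, rule min.cobounded2)
    have "0 < h" unfolding h_def using \<eta>(1) t1(1) by simp
    then have h: "0 < h" "h < \<eta>" and b: "x \<le> b" "b \<le> 1" "b < t1"
      using hle \<eta>(1) t1(1,2) unfolding b_def by (auto simp: field_simps)
    define A where "A = enn2real (curve_length dd \<gamma> x b)"
    define B where "B = enn2real (curve_length dd \<gamma> b 1)"
    have A: "curve_length dd \<gamma> x b = ennreal A" "0 \<le> A"
      and B: "curve_length dd \<gamma> b 1 = ennreal B" "0 \<le> B"
      unfolding A_def B_def using curve_length_finite[OF fin] b x by simp_all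
    have gap: "b < t i" if "i \<le> n" "x < t i" for i using t1(3)[OF that] b(3) by linarith
    have "partition_sum dd \<gamma> (n, t) \<le> ennreal (dd (\<gamma> x) (\<gamma> b)) + ennreal B"
      using partition_sum_le_first_gap[OF P b(1,2) gap, of \<gamma>] unfolding B(1) .
    then have "ennreal (max 0 (L - \<epsilon>/2)) < ennreal (dd (\<gamma> x) (\<gamma> b) + B)"
      using approx B(2) nonneg[of "\<gamma> x" "\<gamma> b"] by (simp add: ennreal_plus)
    then have "L - \<epsilon>/2 < dd (\<gamma> x) (\<gamma> b) + B"
      by (subst (asm) ennreal_less_iff) auto
    moreover have "L = A + B"
      using curve_length_add[of x b 1 \<gamma>] b L A B by (simp flip: ennreal_plus)
    moreover have "dd (\<gamma> x) (\<gamma> b) < \<epsilon>/2"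
      using \<eta>(2)[of b] b x h unfolding b_def by (simp add: sym)
    ultimately have "A < \<epsilon>" by linarith
    then show ?thesis using that[of h] h b A unfolding b_def by (simp add: ennreal_lessI)
  qed
qed

end

definition clamp01 :: "real \<Rightarrow> real" where "clamp01 t = max 0 (min 1 t)"

lemma clamp01_bounds: "0 \<le> clamp01 t" "clamp01 t \<le> 1"
  unfolding clamp01_def by auto

lemma clamp01_mono: "s \<le> t \<Longrightarrow> clamp01 s \<le> clamp01 t"
  unfolding clamp01_def by auto

lemma clamp01_id: "0 \<le> t \<Longrightarrow> t \<le> 1 \<Longrightarrow> clamp01 t = t"
  unfolding clamp01_def by auto

lemma clamp01_lipschitz: "\<bar>clamp01 x - clamp01 y\<bar> \<le> \<bar>x - y\<bar>"
  unfolding clamp01_def by (auto simp: max_def min_def abs_if)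

lemma arclen_clamp01: "arclen dd \<gamma> t = enn2real (curve_length dd \<gamma> 0 (clamp01 t))"
  unfolding arclen_def clamp01_def ..

context pseudometric
begin

lemma arclen_diff:
  assumes fin: "curve_length dd \<gamma> 0 1 < \<infinity>" and xy: "x \<le> y"
  shows "arclen dd \<gamma> y - arclen dd \<gamma> x = enn2real (curve_length dd \<gamma> (clamp01 x) (clamp01 y))"
    and "curve_length dd \<gamma> (clamp01 x) (clamp01 y) < \<infinity>"
proof -
  have c: "0 \<le> clamp01 x" "clamp01 x \<le> clamp01 y" "clamp01 y \<le> 1"
    using clamp01_bounds clamp01_mono[OF xy] by auto
  show "curve_length dd \<gamma> (clamp01 x) (clamp01 y) < \<infinity>"
    using curve_length_finite[OF fin] c by simp
  moreover have "curve_length dd \<gamma> 0 (clamp01 x) < \<infinity>"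
    using curve_length_finite[OF fin] c by simp
  ultimately show "arclen dd \<gamma> y - arclen dd \<gamma> x = enn2real (curve_length dd \<gamma> (clamp01 x) (clamp01 y))"
    unfolding arclen_clamp01 curve_length_add[OF c(1,2)] by (simp add: enn2real_plus)
qed

lemma arclen_mono:
  assumes "curve_length dd \<gamma> 0 1 < \<infinity>" "x \<le> y"
  shows "arclen dd \<gamma> x \<le> arclen dd \<gamma> y"
  using arclen_diff(1)[OF assms] by (metis diff_ge_0_iff_ge enn2real_nonneg)

lemma arclen_continuous_at_right:
  assumes rect: "d_rectifiable dd \<gamma>"
  shows "continuous (at_right x) (arclen dd \<gamma>)"
proof -
  have cur: "d_curve dd \<gamma>" and fin: "curve_length dd \<gamma> 0 1 < \<infinity>"
    using rect unfolding d_rectifiable_def by auto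
  have "\<exists>\<delta>>0. arclen dd \<gamma> (x + \<delta>) - arclen dd \<gamma> x < \<epsilon>" if \<epsilon>: "\<epsilon> > 0" for \<epsilon>
  proof -
    consider "x < 0" | "1 \<le> x" | "0 \<le> x" "x < 1" by linarith
    then show ?thesis
    proof cases
      case 1
      then have "clamp01 (x + (-x/2)) = clamp01 x" unfolding clamp01_def by auto
      then show ?thesis using 1 \<epsilon> unfolding arclen_clamp01 by (intro exI[of _ "-x/2"]) auto
    next
      case 2
      then have "clamp01 (x + 1) = clamp01 x" unfolding clamp01_def by auto
      then show ?thesis using \<epsilon> unfolding arclen_clamp01 by (intro exI[of _ 1]) auto
    next
      case 3
      obtain h where h: "h > 0" "x + h \<le> 1" "curve_length dd \<gamma> x (x + h) < ennreal \<epsilon>"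
        using curve_length_right_small[OF cur fin 3 \<epsilon>] by blast
      have "arclen dd \<gamma> (x + h) - arclen dd \<gamma> x = enn2real (curve_length dd \<gamma> x (x + h))"
        using arclen_diff(1)[OF fin, of x "x + h"] h 3 by (simp add: clamp01_id)
      also have "\<dots> < \<epsilon>"
        using h(3) enn2real_less_iff[of "curve_length dd \<gamma> x (x + h)" \<epsilon>]
        by (simp add: order.strict_trans[OF h(3)])
      finally show ?thesis using h by blast
    qed
  qed
  then show ?thesis
    by (subst continuous_at_right_real_increasing) (auto intro: arclen_mono[OF fin])
qed

lemma emeasure_arclen_Ioc:
  assumes rect: "d_rectifiable dd \<gamma>" and ab: "a \<le> b"
  shows "emeasure (interval_measure (arclen dd \<gamma>)) {a<..b} = curve_length dd \<gamma> (clamp01 a) (clamp01 b)"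
proof -
  have fin: "curve_length dd \<gamma> 0 1 < \<infinity>" using rect unfolding d_rectifiable_def by auto
  have "emeasure (interval_measure (arclen dd \<gamma>)) {a<..b} = ennreal (arclen dd \<gamma> b - arclen dd \<gamma> a)"
    by (rule emeasure_interval_measure_Ioc[OF ab arclen_mono[OF fin] arclen_continuous_at_right[OF rect]])
  then show ?thesis using arclen_diff[OF fin ab] by simp
qed

end

section \<open>The sphericalized metric\<close>

fun chain_sum :: "('b \<Rightarrow> 'b \<Rightarrow> real) \<Rightarrow> 'b list \<Rightarrow> real" where
  "chain_sum f (x # y # xs) = f x y + chain_sum f (y # xs)"
| "chain_sum f _ = 0"

definition chains :: "'b \<Rightarrow> 'b \<Rightarrow> 'b list set" where
  "chains x y = {xs. xs \<noteq> [] \<and> hd xs = x \<and> last xs = y}"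

lemma sum_nth_eq_chain_sum: "(\<Sum>j<length xs - 1. f (xs ! j) (xs ! Suc j)) = chain_sum f xs"
proof (induction f xs rule: chain_sum.induct)
  case (1 f x y xs)
  have "(\<Sum>j<length (x # y # xs) - 1. f ((x # y # xs) ! j) ((x # y # xs) ! Suc j))
      = f x y + (\<Sum>j<length (y # xs) - 1. f ((y # xs) ! j) ((y # xs) ! Suc j))"
    by (simp only: length_Cons diff_Suc_1 sum.lessThan_Suc_shift) simp
  then show ?case using 1 by simp
qed auto

lemma chain_sum_append: "chain_sum f (xs @ y # ys) = chain_sum f (xs @ [y]) + chain_sum f (y # ys)"
  by (induction xs rule: induct_list012) auto

lemma chain_sum_rev:
  assumes "\<And>u v. f u v = f v u"
  shows "chain_sum f (rev xs) = chain_sum f xs"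
proof (induction xs rule: induct_list012)
  case (3 x y zs)
  have "chain_sum f (rev (x # y # zs)) = chain_sum f (rev (y # zs)) + f y x"
    using chain_sum_append[of f "rev zs" y "[x]"] by simp
  then show ?case using 3(2) assms[of y x] by simp
qed auto

lemma chain_sum_nonneg: "(\<And>u v. 0 \<le> f u v) \<Longrightarrow> 0 \<le> chain_sum f xs"
  by (induction xs rule: induct_list012) (auto intro: add_nonneg_nonneg)

lemma chains_pair: "[x, y] \<in> chains x y"
  unfolding chains_def by simp

lemma chains_rev: "xs \<in> chains x y \<Longrightarrow> rev xs \<in> chains y x"
  unfolding chains_def by (simp add: hd_rev last_rev)

lemma chains_append:
  assumes "xs \<in> chains x y" "ys \<in> chains y z"
  shows "xs @ tl ys \<in> chains x z" "chain_sum f (xs @ tl ys) = chain_sum f xs + chain_sum f ys"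
proof -
  have "xs \<noteq> []" "last xs = y" "ys \<noteq> []" "hd ys = y" using assms unfolding chains_def by auto
  then obtain xs0 ys0 where xs: "xs = xs0 @ [y]" and ys: "ys = y # ys0"
    by (metis append_butlast_last_id list.collapse)
  show "xs @ tl ys \<in> chains x z" using assms unfolding chains_def xs ys
    by (cases ys0) (auto simp: hd_append)
  show "chain_sum f (xs @ tl ys) = chain_sum f xs + chain_sum f ys"
    unfolding xs ys using chain_sum_append[of f xs0 y ys0] by simp
qed

locale sphericalization =
  fixes d :: "'a \<Rightarrow> 'a \<Rightarrow> real" and a :: 'a
  assumes metric: "metric_on d"
begin

lemma d_nonneg: "0 \<le> d x y" using metric unfolding metric_on_def by auto
lemma d_refl: "d x x = 0" using metric unfolding metric_on_def by auto
lemma d_sym: "d x y = d y x" using metric unfolding metric_on_def by auto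
lemma d_triangle: "d x z \<le> d x y + d y z" using metric unfolding metric_on_def by auto

sublocale d: pseudometric d
  by unfold_locales (rule d_nonneg, rule d_refl, rule d_sym, rule d_triangle)

definition N :: "'a \<Rightarrow> real" where "N x = 1 + d x a"

lemma N_ge_1: "1 \<le> N x"
  unfolding N_def using d_nonneg by simp

lemma N_pos: "0 < N x"
  using N_ge_1[of x] by simp

lemma N_lipschitz: "N y \<le> N x + d x y" "N x - d x y \<le> N y"
  unfolding N_def using d_triangle[where x=y and y=x and z=a] d_triangle[where x=x and y=y and z=a]
    d_sym[of x y] by auto

lemma d_a_Some_Some: "d_a d a (Some x) (Some y) = d x y / (N x * N y)"
  and d_a_Some_None: "d_a d a (Some x) None = 1 / N x"
  and d_a_None_Some: "d_a d a None (Some x) = 1 / N x"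
  unfolding N_def by simp_all

lemma d_a_nonneg: "0 \<le> d_a d a u v"
  by (cases u; cases v) (auto simp: d_a_Some_Some d_a_Some_None d_a_None_Some d_nonneg N_pos less_imp_le)

lemma d_a_sym: "d_a d a u v = d_a d a v u"
  by (cases u; cases v) (auto simp: d_a_Some_Some d_a_Some_None d_a_None_Some d_sym mult.commute)

lemma hat_d_eq_INF: "hat_d d a u v = (INF xs\<in>chains u v. chain_sum (d_a d a) xs)"
  unfolding hat_d_def chains_def sum_nth_eq_chain_sum ..

lemma hat_d_le_chain_sum: "xs \<in> chains u v \<Longrightarrow> hat_d d a u v \<le> chain_sum (d_a d a) xs"
  unfolding hat_d_eq_INF
  by (rule cINF_lower) (auto intro!: bdd_belowI[of _ 0] chain_sum_nonneg d_a_nonneg)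

lemma hat_d_greatest:
  "(\<And>xs. xs \<in> chains u v \<Longrightarrow> L \<le> chain_sum (d_a d a) xs) \<Longrightarrow> L \<le> hat_d d a u v"
  unfolding hat_d_eq_INF using chains_pair[of u v] by (intro cINF_greatest) auto

lemma hat_d_nonneg: "0 \<le> hat_d d a u v"
  by (intro hat_d_greatest chain_sum_nonneg d_a_nonneg)

lemma hat_d_refl: "hat_d d a u u = 0"
  using hat_d_le_chain_sum[of "[u]" u u] hat_d_nonneg[of u u] by (simp add: chains_def)

lemma hat_d_Some_le: "hat_d d a (Some x) (Some y) \<le> d x y / (N x * N y)"
  using hat_d_le_chain_sum[OF chains_pair, of "Some x" "Some y"] by (simp only: chain_sum.simps d_a_Some_Some add_0_right)

lemma hat_d_le_d: "hat_d d a (Some x) (Some y) \<le> d x y"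
proof -
  have "1 \<le> N x * N y" using N_ge_1[of x] N_ge_1[of y] by (metis mult_mono' mult_1 zero_le_one)
  then have "d x y / (N x * N y) \<le> d x y"
    using d_nonneg[of x y] by (simp add: divide_le_eq mult_le_cancel_left1 mult.commute)
  then show ?thesis using hat_d_Some_le[of x y] by simp
qed

lemma hat_d_sym: "hat_d d a u v = hat_d d a v u"
proof -
  have *: "hat_d d a u v \<le> hat_d d a v u" for u v
  proof (rule hat_d_greatest)
    fix xs assume "xs \<in> chains v u"
    then have "hat_d d a u v \<le> chain_sum (d_a d a) (rev xs)" by (intro hat_d_le_chain_sum chains_rev)
    then show "hat_d d a u v \<le> chain_sum (d_a d a) xs" using chain_sum_rev[of "d_a d a" xs] d_a_sym by simp
  qed
  show ?thesis using *[of u v] *[of v u] by simp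
qed

lemma hat_d_triangle: "hat_d d a u w \<le> hat_d d a u v + hat_d d a v w"
proof -
  have "hat_d d a u w - hat_d d a u v \<le> hat_d d a v w"
  proof (rule hat_d_greatest)
    fix ys assume ys: "ys \<in> chains v w"
    have "hat_d d a u w - chain_sum (d_a d a) ys \<le> hat_d d a u v"
    proof (rule hat_d_greatest)
      fix xs assume xs: "xs \<in> chains u v"
      show "hat_d d a u w - chain_sum (d_a d a) ys \<le> chain_sum (d_a d a) xs"
        using hat_d_le_chain_sum[OF chains_append(1)[OF xs ys]] chains_append(2)[OF xs ys] by simp
    qed
    then show "hat_d d a u w - hat_d d a u v \<le> chain_sum (d_a d a) ys" by linarith
  qed
  then show ?thesis by simp
qed

sublocale hat: pseudometric "hat_d d a"
  by unfold_locales (rule hat_d_nonneg, rule hat_d_refl, rule hat_d_sym, rule hat_d_triangle)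

end

lemma escape_cost_le:
  fixes A D M P Q r :: real
  assumes A: "0 \<le> A" and D: "0 \<le> D" and r: "0 < r" "r \<le> A + D" and P: "0 < P" "P \<le> M"
    and Q: "0 < Q" "Q \<le> P + D"
  shows "r / (M * (M + r)) \<le> A / M^2 + D / (P * Q)"
proof -
  have M: "0 < M" using P by simp
  have "r * (M + (A + D)) \<le> (A + D) * (M + r)"
    using mult_right_mono[OF r(2), of M] M by (simp add: algebra_simps)
  then have "r * (M * (M + (A + D))) \<le> (A + D) * (M * (M + r))"
    using M by (metis mult.assoc mult.left_commute mult_le_cancel_left_pos)
  then have "r / (M * (M + r)) \<le> (A + D) / (M * (M + (A + D)))"
    using M r A D by (simp add: divide_simps)
  also have "\<dots> \<le> (A + D) / (M * (M + D))"
    using M A D by (intro divide_left_mono mult_left_mono) auto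
  also have "\<dots> = A / (M * (M + D)) + D / (M * (M + D))" by (simp add: add_divide_distrib)
  also have "\<dots> \<le> A / M^2 + D / (P * Q)"
    using A D M P Q by (intro add_mono divide_left_mono mult_mono) (auto simp: power2_eq_square)
  finally show ?thesis .
qed

context sphericalization
begin

text \<open>A lower bound for hat_d from Some x: with M = N x + r, a chain from Some x either stays
  in the d-ball B(x, r), where each step costs at least d/M^2, or has to pay
  r / (M (M + r)) to leave it (through a far point or through None).\<close>
definition escape_bound :: "'a \<Rightarrow> real \<Rightarrow> 'a option \<Rightarrow> real" where
  "escape_bound x r z = (let M = N x + r; c = r / (M * (M + r)) in
     (case z of None \<Rightarrow> c | Some y \<Rightarrow> min c (d x y / M^2)))"

lemma escape_bound_le_chain_sum:
  assumes r: "0 < r"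
  shows "zs \<noteq> [] \<Longrightarrow> hd zs = Some v \<Longrightarrow> d x v < r \<Longrightarrow>
    escape_bound x r (last zs) \<le> d x v / (N x + r)^2 + chain_sum (d_a d a) zs"
proof (induction zs arbitrary: v rule: induct_list012)
  case (2 z)
  then show ?case unfolding escape_bound_def Let_def by simp
next
  case (3 z w zs)
  define M where "M = N x + r"
  define c where "c = r / (M * (M + r))"
  have M1: "1 \<le> M" unfolding M_def using N_ge_1[of x] r by simp
  have zv: "z = Some v" using 3 by simp
  have Nv: "N v \<le> M" unfolding M_def using N_lipschitz(1)[of v x] 3(5) by simp
  have sum: "chain_sum (d_a d a) (z # w # zs) = d_a d a (Some v) w + chain_sum (d_a d a) (w # zs)"
    using zv by simp
  have rest: "0 \<le> chain_sum (d_a d a) (w # zs)" by (intro chain_sum_nonneg d_a_nonneg)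
  have le_c: "escape_bound x r (last (z # w # zs)) \<le> c"
    unfolding c_def M_def escape_bound_def Let_def by (auto split: option.split)
  have "0 \<le> d x v / M^2" using d_nonneg by simp
  show ?case
  proof (cases w)
    case None
    have "r / (M + r) / M \<le> 1 / M" using r M1 by (intro divide_right_mono) auto
    then have "c \<le> 1 / M" unfolding c_def by (simp add: field_simps)
    also have "1 / M \<le> 1 / N v" using Nv N_pos[of v] by (intro divide_left_mono) auto
    also have "\<dots> = d_a d a (Some v) w" by (simp only: None d_a_Some_None)
    finally show ?thesis using le_c sum rest \<open>0 \<le> d x v / M^2\<close> unfolding M_def by simp
  next
    case (Some u)
    show ?thesis
    proof (cases "d x u < r")
      case True
      have IH: "escape_bound x r (last (w # zs)) \<le> d x u / M^2 + chain_sum (d_a d a) (w # zs)"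
        using 3(2)[of u] Some True unfolding M_def by simp
      have Nu: "N u \<le> M" unfolding M_def using N_lipschitz(1)[of u x] True by simp
      have "d v u / M^2 \<le> d v u / (N v * N u)"
        using Nv Nu N_pos[of v] N_pos[of u] d_nonneg[of v u]
        by (intro divide_left_mono) (auto simp: power2_eq_square intro: mult_mono)
      also have "\<dots> = d_a d a (Some v) w" by (simp only: Some d_a_Some_Some)
      finally have step: "d v u / M^2 \<le> d_a d a (Some v) w" .
      have "d x u / M^2 \<le> d x v / M^2 + d v u / M^2"
        using d_triangle[where x=x and y=v and z=u] M1
        by (simp add: add_divide_distrib[symmetric] divide_right_mono)
      then show ?thesis using IH step sum unfolding M_def by simp
    next
      case False
      have "c \<le> d x v / M^2 + d v u / (N v * N u)"
        unfolding c_def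
      proof (rule escape_cost_le)
        show "r \<le> d x v + d v u" using False d_triangle[where x=x and y=v and z=u] by simp
      qed (use r d_nonneg N_pos Nv N_lipschitz(1)[of u v] in auto)
      also have "\<dots> = d x v / M^2 + d_a d a (Some v) w" by (simp only: Some d_a_Some_Some)
      finally show ?thesis using le_c sum rest unfolding M_def by simp
    qed
  qed
qed simp

lemma escape_bound_le_hat_d:
  assumes "0 < r"
  shows "escape_bound x r z \<le> hat_d d a (Some x) z"
proof (rule hat_d_greatest)
  fix zs assume "zs \<in> chains (Some x) z"
  then show "escape_bound x r z \<le> chain_sum (d_a d a) zs"
    using escape_bound_le_chain_sum[OF assms, of zs x x] assms d_refl[of x]
    unfolding chains_def by simp
qed

lemma small_hat_ball_Some:
  assumes r: "0 < r"
  obtains \<epsilon> where "\<epsilon> > 0" "\<And>z. hat_d d a (Some x) z < \<epsilon> \<Longrightarrow> \<exists>y. z = Some y \<and> d x y < r"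
proof -
  define M where "M = N x + r"
  define c where "c = r / (M * (M + r))"
  have M1: "1 \<le> M" unfolding M_def using N_ge_1[of x] r by simp
  have "0 < min c (r / M^2)" unfolding c_def using r M1 by simp
  moreover have "\<exists>y. z = Some y \<and> d x y < r" if z: "hat_d d a (Some x) z < min c (r / M^2)" for z
  proof -
    have lo: "escape_bound x r z < min c (r / M^2)"
      using escape_bound_le_hat_d[OF r, of x z] z by simp
    show ?thesis
    proof (cases z)
      case None
      then show ?thesis using lo unfolding escape_bound_def c_def M_def Let_def by simp
    next
      case (Some y)
      then have "d x y / M^2 < r / M^2"
        using lo unfolding escape_bound_def c_def M_def Let_def by (auto simp: min_def split: if_splits)
      then show ?thesis using Some M1 by (simp add: divide_less_cancel)
    qed
  qed
  ultimately show ?thesis using that by blast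
qed

lemma hat_d_local_bounds:
  assumes \<rho>: "0 < \<rho>" "\<rho> \<le> 1/4" and y: "d x y < \<rho>" and y': "d x y' < \<rho>"
  shows "d y y' / (N x + 5 * \<rho>)^2 \<le> hat_d d a (Some y) (Some y')"
    and "hat_d d a (Some y) (Some y') \<le> d y y' / (N x - \<rho>)^2"
proof -
  define r where "r = 4 * \<rho>"
  define M where "M = N y + r"
  have r: "0 < r" "r \<le> 1" unfolding r_def using \<rho> by auto
  have M1: "1 \<le> M" unfolding M_def using N_ge_1[of y] r by simp
  have "M \<le> N x + 5 * \<rho>" unfolding M_def r_def using N_lipschitz(1)[of y x] y by simp
  have dyy: "d y y' < 2 * \<rho>" using d_triangle[where x=y and y=x and z=y'] d_sym[of x y] y y' by simp
  have "d y y' * (M + r) \<le> (r/2) * (M + r)"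
    using dyy r M1 unfolding r_def by (intro mult_right_mono) auto
  also have "\<dots> \<le> (r/2) * (M + M)" using r M1 by (intro mult_left_mono) auto
  finally have "M * (d y y' * (M + r)) \<le> M * (r * M)" using M1 by (intro mult_left_mono) auto
  then have "d y y' * (M * (M + r)) \<le> r * M^2" by (simp add: power2_eq_square algebra_simps)
  then have "d y y' / M^2 \<le> r / (M * (M + r))" using M1 r by (simp add: divide_simps)
  then have "escape_bound y r (Some y') = d y y' / M^2"
    unfolding escape_bound_def M_def Let_def by (simp add: min_def)
  then have "d y y' / M^2 \<le> hat_d d a (Some y) (Some y')"
    using escape_bound_le_hat_d[OF r(1), of y "Some y'"] by simp
  moreover have "d y y' / (N x + 5 * \<rho>)^2 \<le> d y y' / M^2"
    using \<open>M \<le> N x + 5 * \<rho>\<close> M1 d_nonneg by (intro divide_left_mono power_mono) auto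
  ultimately show "d y y' / (N x + 5 * \<rho>)^2 \<le> hat_d d a (Some y) (Some y')" by simp
  have lo: "N x - \<rho> \<le> N y" "N x - \<rho> \<le> N y'" "0 < N x - \<rho>"
    using N_lipschitz(2)[of x y] N_lipschitz(2)[of x y'] y y' N_ge_1[of x] \<rho> by auto
  have "hat_d d a (Some y) (Some y') \<le> d y y' / (N y * N y')" by (rule hat_d_Some_le)
  also have "\<dots> \<le> d y y' / (N x - \<rho>)^2"
    using lo d_nonneg unfolding power2_eq_square by (intro divide_left_mono mult_mono) auto
  finally show "hat_d d a (Some y) (Some y') \<le> d y y' / (N x - \<rho>)^2" .
qed

end

lemma inverse_square_gap_le:
  fixes N \<rho> :: real
  assumes N: "1 \<le> N" and \<rho>: "0 < \<rho>" "\<rho> \<le> 1/4"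
  shows "1 / (N - \<rho>)^2 - 1 / (N + 5 * \<rho>)^2 \<le> 32 * \<rho>"
proof -
  define u where "u = N - \<rho>"
  define v where "v = N + 5 * \<rho>"
  have u: "3/4 \<le> u" and uv: "u \<le> v" and vu: "v - u = 6 * \<rho>"
    unfolding u_def v_def using N \<rho> by auto
  have u0: "0 < u" and v0: "0 < v" using u uv by auto
  have "v * u \<le> v * v" "u * u \<le> v * v" using uv u0 v0 by (intro mult_left_mono mult_mono; simp)+
  then have "(v + u) * u \<le> 2 * v^2" by (simp add: power2_eq_square algebra_simps)
  then have "(v + u) * u^3 \<le> 2 * (u^2 * v^2)"
    using mult_right_mono[of "(v + u) * u" "2 * v^2" "u^2"] u0
    by (simp add: power2_eq_square power3_eq_cube algebra_simps)
  then have "(v + u) / (u^2 * v^2) \<le> 2 / u^3" using u0 v0 by (simp add: divide_simps)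
  also have "\<dots> \<le> 128/27"
    using power_mono[OF u, of 3] u0 by (simp add: divide_simps power3_eq_cube)
  finally have "(v + u) / (u^2 * v^2) \<le> 128/27" .
  have "1/u^2 - 1/v^2 = (v - u) * ((v + u) / (u^2 * v^2))"
    using u0 v0 by (simp add: field_simps power2_eq_square)
  also have "\<dots> \<le> (6 * \<rho>) * (128/27)"
    unfolding vu using \<open>(v + u) / (u^2 * v^2) \<le> 128/27\<close> \<rho> by (intro mult_left_mono) auto
  finally show ?thesis unfolding u_def v_def using \<rho> by simp
qed

lemma interval_property_by_small_steps:
  fixes P :: "real \<Rightarrow> real \<Rightarrow> bool"
  assumes \<delta>: "\<delta> > 0"
    and small: "\<And>a b. lo \<le> a \<Longrightarrow> a \<le> b \<Longrightarrow> b \<le> hi \<Longrightarrow> b - a < \<delta> \<Longrightarrow> P a b"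
    and concat: "\<And>a b c. lo \<le> a \<Longrightarrow> a \<le> b \<Longrightarrow> b \<le> c \<Longrightarrow> c \<le> hi \<Longrightarrow> P a b \<Longrightarrow> P b c \<Longrightarrow> P a c"
    and ab: "lo \<le> a" "a \<le> b" "b \<le> hi"
  shows "P a b"
proof -
  have "\<forall>a b. lo \<le> a \<and> a \<le> b \<and> b \<le> hi \<and> b - a < real (Suc n) * (\<delta>/2) \<longrightarrow> P a b" for n
  proof (induction n)
    case 0
    then show ?case using small \<delta> by auto
  next
    case (Suc n)
    show ?case
    proof (intro allI impI)
      fix a b assume h: "lo \<le> a \<and> a \<le> b \<and> b \<le> hi \<and> b - a < real (Suc (Suc n)) * (\<delta>/2)"
      show "P a b"
      proof (cases "b - a < \<delta>")
        case False
        define c where "c = b - \<delta>/2"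
        have c: "a \<le> c" "c \<le> b" "c - a < real (Suc n) * (\<delta>/2)" "b - c < \<delta>"
          using False h \<delta> unfolding c_def by (auto simp: field_simps)
        then show ?thesis using concat[of a c b] Suc.IH small[of c b] h by auto
      qed (use small h in auto)
    qed
  qed
  moreover obtain n where "b - a < real n * (\<delta>/2)"
    using ex_less_of_nat_mult[of "\<delta>/2" "b - a"] \<delta> by auto
  then have "b - a < real (Suc n) * (\<delta>/2)"
    using \<delta> by (smt (verit) mult_right_mono of_nat_Suc half_gt_zero)
  ultimately show ?thesis using ab by blast
qed

context sphericalization
begin

lemma d_curve_lift_iff:
  assumes eq: "\<And>t. 0 \<le> t \<Longrightarrow> t \<le> 1 \<Longrightarrow> \<gamma>h t = Some (\<gamma> t)"
  shows "d_curve (hat_d d a) \<gamma>h \<longleftrightarrow> d_curve d \<gamma>"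
proof
  assume hc: "d_curve (hat_d d a) \<gamma>h"
  show "d_curve d \<gamma>" unfolding d_curve_def
  proof (intro ballI allI impI)
    fix t e :: real assume t: "t \<in> {0..1}" and e: "e > 0"
    obtain \<epsilon> where \<epsilon>: "\<epsilon> > 0" "\<And>z. hat_d d a (Some (\<gamma> t)) z < \<epsilon> \<Longrightarrow> \<exists>y. z = Some y \<and> d (\<gamma> t) y < e"
      using small_hat_ball_Some[OF e] by blast
    then obtain \<delta> where \<delta>: "\<delta> > 0" "\<And>s. s \<in> {0..1} \<Longrightarrow> \<bar>s - t\<bar> < \<delta> \<Longrightarrow> hat_d d a (\<gamma>h s) (\<gamma>h t) < \<epsilon>"
      using hc t unfolding d_curve_def by meson
    have "d (\<gamma> s) (\<gamma> t) < e" if s: "s \<in> {0..1}" "\<bar>s - t\<bar> < \<delta>" for s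
      using \<epsilon>(2)[of "Some (\<gamma> s)"] \<delta>(2)[OF s] eq s(1) t hat_d_sym d_sym by auto
    then show "\<exists>\<delta>>0. \<forall>s\<in>{0..1}. \<bar>s - t\<bar> < \<delta> \<longrightarrow> d (\<gamma> s) (\<gamma> t) < e" using \<delta>(1) by blast
  qed
next
  assume "d_curve d \<gamma>"
  then show "d_curve (hat_d d a) \<gamma>h"
    unfolding d_curve_def using eq hat_d_le_d by (smt (verit, best) atLeastAtMost_iff)
qed

lemma curve_length_lift_le:
  assumes eq: "\<And>t. 0 \<le> t \<Longrightarrow> t \<le> 1 \<Longrightarrow> \<gamma>h t = Some (\<gamma> t)" and st: "0 \<le> s" "t \<le> 1"
  shows "curve_length (hat_d d a) \<gamma>h s t \<le> curve_length d \<gamma> s t"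
proof -
  have "curve_length (hat_d d a) \<gamma>h s t \<le> 1 * curve_length d \<gamma> s t"
    by (rule curve_length_le_cmult) (use eq st hat_d_le_d in \<open>auto intro: ennreal_leI\<close>)
  then show ?thesis by simp
qed

lemma d_rectifiable_lift:
  assumes eq: "\<And>t. 0 \<le> t \<Longrightarrow> t \<le> 1 \<Longrightarrow> \<gamma>h t = Some (\<gamma> t)" and rect: "d_rectifiable d \<gamma>"
  shows "d_rectifiable (hat_d d a) \<gamma>h"
  using rect curve_length_lift_le[of \<gamma>h \<gamma> 0 1, OF eq] d_curve_lift_iff[of \<gamma>h \<gamma>, OF eq]
  unfolding d_rectifiable_def by (auto intro: le_less_trans)

lemma curve_length_lift_local:
  assumes eq: "\<And>t. 0 \<le> t \<Longrightarrow> t \<le> 1 \<Longrightarrow> \<gamma>h t = Some (\<gamma> t)"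
    and \<rho>: "0 < \<rho>" "\<rho> \<le> 1/4" and st: "0 \<le> s" "s \<le> t" "t \<le> 1"
    and near: "\<And>u. s \<le> u \<Longrightarrow> u \<le> t \<Longrightarrow> d (\<gamma> s) (\<gamma> u) < \<rho>"
  shows "ennreal (1 / (N (\<gamma> s) + 5 * \<rho>)^2) * curve_length d \<gamma> s t \<le> curve_length (hat_d d a) \<gamma>h s t"
    and "curve_length (hat_d d a) \<gamma>h s t \<le> ennreal (1 / (N (\<gamma> s) - \<rho>)^2) * curve_length d \<gamma> s t"
proof -
  show "ennreal (1 / (N (\<gamma> s) + 5 * \<rho>)^2) * curve_length d \<gamma> s t \<le> curve_length (hat_d d a) \<gamma>h s t"
  proof (rule cmult_curve_length_le)
    fix u v assume uv: "s \<le> u" "u \<le> v" "v \<le> t"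
    have "d (\<gamma> u) (\<gamma> v) / (N (\<gamma> s) + 5 * \<rho>)^2 \<le> hat_d d a (Some (\<gamma> u)) (Some (\<gamma> v))"
      by (rule hat_d_local_bounds(1)[OF \<rho>]) (use near uv in auto)
    then show "ennreal (1 / (N (\<gamma> s) + 5 * \<rho>)^2) * ennreal (d (\<gamma> u) (\<gamma> v)) \<le> ennreal (hat_d d a (\<gamma>h u) (\<gamma>h v))"
      using eq uv st d_nonneg by (simp add: ennreal_mult[symmetric] ennreal_leI)
  qed
  show "curve_length (hat_d d a) \<gamma>h s t \<le> ennreal (1 / (N (\<gamma> s) - \<rho>)^2) * curve_length d \<gamma> s t"
  proof (rule curve_length_le_cmult)
    fix u v assume uv: "s \<le> u" "u \<le> v" "v \<le> t"
    have "hat_d d a (Some (\<gamma> u)) (Some (\<gamma> v)) \<le> d (\<gamma> u) (\<gamma> v) / (N (\<gamma> s) - \<rho>)^2"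
      by (rule hat_d_local_bounds(2)[OF \<rho>]) (use near uv in auto)
    then show "ennreal (hat_d d a (\<gamma>h u) (\<gamma>h v)) \<le> ennreal (1 / (N (\<gamma> s) - \<rho>)^2) * ennreal (d (\<gamma> u) (\<gamma> v))"
      using eq uv st d_nonneg by (simp add: ennreal_mult[symmetric] ennreal_leI)
  qed
qed

lemma curve_stays_near:
  assumes "d_curve d \<gamma>" "0 < \<rho>"
  obtains \<delta> where "\<delta> > 0"
    "\<And>s t u. 0 \<le> s \<Longrightarrow> t \<le> 1 \<Longrightarrow> t - s < \<delta> \<Longrightarrow> s \<le> u \<Longrightarrow> u \<le> t \<Longrightarrow> d (\<gamma> s) (\<gamma> u) < \<rho>"
proof -
  obtain \<delta> where "\<delta> > 0" "\<And>s t. s \<in> {0..1} \<Longrightarrow> t \<in> {0..1} \<Longrightarrow> \<bar>s - t\<bar> < \<delta> \<Longrightarrow> d (\<gamma> s) (\<gamma> t) < \<rho>"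
    using d.uniformly_continuous_curve[OF assms] by blast
  then show ?thesis using that[of \<delta>] by simp
qed

text \<open>On short pieces hat_d is comparable to d up to a positive factor, so finiteness of the
  length propagates from short pieces to [0, 1].\<close>
lemma d_rectifiable_unlift:
  assumes eq: "\<And>t. 0 \<le> t \<Longrightarrow> t \<le> 1 \<Longrightarrow> \<gamma>h t = Some (\<gamma> t)"
    and rect: "d_rectifiable (hat_d d a) \<gamma>h"
  shows "d_rectifiable d \<gamma>"
proof -
  have cur: "d_curve d \<gamma>" using rect d_curve_lift_iff[of \<gamma>h \<gamma>, OF eq] unfolding d_rectifiable_def by simp
  have hfin: "curve_length (hat_d d a) \<gamma>h 0 1 < \<infinity>" using rect unfolding d_rectifiable_def by simp
  obtain \<delta> where \<delta>: "\<delta> > 0"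
    "\<And>s t u. 0 \<le> s \<Longrightarrow> t \<le> 1 \<Longrightarrow> t - s < \<delta> \<Longrightarrow> s \<le> u \<Longrightarrow> u \<le> t \<Longrightarrow> d (\<gamma> s) (\<gamma> u) < 1/4"
    using curve_stays_near[OF cur, of "1/4"] by auto
  have "curve_length d \<gamma> 0 1 < \<infinity>"
  proof (rule interval_property_by_small_steps[where P = "\<lambda>s t. curve_length d \<gamma> s t < \<infinity>", OF \<delta>(1)])
    fix s t assume st: "0 \<le> s" "s \<le> t" "t \<le> 1" "t - s < \<delta>"
    have "ennreal (1 / (N (\<gamma> s) + 5 * (1/4))^2) * curve_length d \<gamma> s t \<le> curve_length (hat_d d a) \<gamma>h s t"
      by (rule curve_length_lift_local(1)[of \<gamma>h \<gamma>, OF eq _ _ st(1-3)]) (use \<delta>(2) st in auto)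
    also have "\<dots> < \<infinity>" using hat.curve_length_finite[OF hfin st(1-3)] .
    finally show "curve_length d \<gamma> s t < \<infinity>"
      using N_pos[of "\<gamma> s"] by (auto simp: ennreal_mult_less_top top.not_eq_extremum)
  next
    fix s m t assume "0 \<le> s" "s \<le> m" "m \<le> t" "t \<le> 1" "curve_length d \<gamma> s m < \<infinity>" "curve_length d \<gamma> m t < \<infinity>"
    then show "curve_length d \<gamma> s t < \<infinity>" using d.curve_length_add[of s m t \<gamma>] by simp
  qed auto
  then show ?thesis using cur unfolding d_rectifiable_def by simp
qed

end

lemma enn2real_cmult_le:
  assumes "x < \<infinity>" "y < \<infinity>" "ennreal c * x \<le> y" "0 \<le> c"
  shows "c * enn2real x \<le> enn2real y"
proof -
  have "enn2real (ennreal c * x) \<le> enn2real y" using assms by (intro enn2real_mono) auto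
  then show ?thesis using assms by (simp add: enn2real_mult)
qed

lemma enn2real_le_cmult:
  assumes "x < \<infinity>" "y \<le> ennreal c * x" "0 \<le> c"
  shows "enn2real y \<le> c * enn2real x"
  using enn2real_mono[OF assms(2)] assms by (simp add: enn2real_mult ennreal_mult_less_top)

locale lifted_curve = sphericalization d a for d :: "'a \<Rightarrow> 'a \<Rightarrow> real" and a :: 'a +
  fixes \<gamma> :: "real \<Rightarrow> 'a" and \<gamma>h :: "real \<Rightarrow> 'a option"
  assumes lift: "\<And>t. 0 \<le> t \<Longrightarrow> t \<le> 1 \<Longrightarrow> \<gamma>h t = Some (\<gamma> t)"
    and rect: "d_rectifiable d \<gamma>"
begin

lemma curve: "d_curve d \<gamma>"
  using rect unfolding d_rectifiable_def by simp

lemma hat_rect: "d_rectifiable (hat_d d a) \<gamma>h"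
  by (rule d_rectifiable_lift[of \<gamma>h \<gamma>, OF lift rect])

lemma length_finite: "0 \<le> s \<Longrightarrow> s \<le> t \<Longrightarrow> t \<le> 1 \<Longrightarrow> curve_length d \<gamma> s t < \<infinity>"
  using d.curve_length_finite rect unfolding d_rectifiable_def by blast

lemma hat_length_finite:
  "0 \<le> s \<Longrightarrow> s \<le> t \<Longrightarrow> t \<le> 1 \<Longrightarrow> curve_length (hat_d d a) \<gamma>h s t < \<infinity>"
  using hat.curve_length_finite hat_rect unfolding d_rectifiable_def by blast

lemma emeasure_arclen_Ioc:
  "0 \<le> s \<Longrightarrow> s \<le> t \<Longrightarrow> t \<le> 1 \<Longrightarrow>
    emeasure (interval_measure (arclen d \<gamma>)) {s<..t} = curve_length d \<gamma> s t"
  using d.emeasure_arclen_Ioc[OF rect, of s t] by (simp add: clamp01_id)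

lemma continuous_N_curve: "continuous_on UNIV (\<lambda>t. N (\<gamma> (clamp01 t)))"
  unfolding continuous_on_iff
proof (intro ballI allI impI)
  fix x e :: real assume e: "0 < e"
  obtain \<delta> where \<delta>: "\<delta> > 0" "\<And>s t. s \<in> {0..1} \<Longrightarrow> t \<in> {0..1} \<Longrightarrow> \<bar>s - t\<bar> < \<delta> \<Longrightarrow> d (\<gamma> s) (\<gamma> t) < e"
    using d.uniformly_continuous_curve[OF curve e] by blast
  have "dist (N (\<gamma> (clamp01 y))) (N (\<gamma> (clamp01 x))) < e" if "dist y x < \<delta>" for y
  proof -
    have "d (\<gamma> (clamp01 y)) (\<gamma> (clamp01 x)) < e"
      using \<delta>(2) clamp01_bounds clamp01_lipschitz[of y x] that by (simp add: dist_real_def)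
    then show ?thesis
      using N_lipschitz[of "\<gamma> (clamp01 y)" "\<gamma> (clamp01 x)"] N_lipschitz[of "\<gamma> (clamp01 x)" "\<gamma> (clamp01 y)"]
        d_sym[of "\<gamma> (clamp01 y)"] by (simp add: dist_real_def abs_less_iff)
  qed
  then show "\<exists>\<delta>>0. \<forall>y\<in>UNIV. dist y x < \<delta> \<longrightarrow> dist (N (\<gamma> (clamp01 y))) (N (\<gamma> (clamp01 x))) < e"
    using \<delta>(1) by blast
qed

lemma borel_measurable_N_curve[measurable]: "(\<lambda>t. N (\<gamma> (clamp01 t))) \<in> borel_measurable borel"
  by (rule borel_measurable_continuous_onI[OF continuous_N_curve])

definition arc_density :: "real \<Rightarrow> real" where
  "arc_density t = 1 / (N (\<gamma> (clamp01 t)))^2"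

lemma arc_density_pos: "0 < arc_density t"
  unfolding arc_density_def using N_pos[of "\<gamma> (clamp01 t)"] by simp

lemma arc_density_measurable[measurable]:
  "arc_density \<in> borel_measurable (interval_measure (arclen d \<gamma>))"
  unfolding arc_density_def by (subst measurable_cong_sets[OF sets_interval_measure refl]) measurable

definition weighted_length :: "real \<Rightarrow> real \<Rightarrow> ennreal" where
  "weighted_length s t =
     (\<integral>\<^sup>+u. ennreal (arc_density u) * indicator {s<..t} u \<partial>interval_measure (arclen d \<gamma>))"

lemma weighted_length_bounds:
  assumes st: "0 \<le> s" "s \<le> t" "t \<le> 1" and c: "0 \<le> c1"
    and bounds: "\<And>u. s < u \<Longrightarrow> u \<le> t \<Longrightarrow> c1 \<le> 1 / (N (\<gamma> u))^2 \<and> 1 / (N (\<gamma> u))^2 \<le> c2"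
  shows "ennreal c1 * curve_length d \<gamma> s t \<le> weighted_length s t"
    and "weighted_length s t \<le> ennreal c2 * curve_length d \<gamma> s t"
proof -
  have Ioc: "{s<..t} \<in> sets (interval_measure (arclen d \<gamma>))" by simp
  have density: "c1 \<le> arc_density u \<and> arc_density u \<le> c2" if "u \<in> {s<..t}" for u
    using bounds[of u] that st clamp01_id[of u] unfolding arc_density_def by auto
  have "ennreal c1 * curve_length d \<gamma> s t
      = (\<integral>\<^sup>+u. ennreal c1 * indicator {s<..t} u \<partial>interval_measure (arclen d \<gamma>))"
    using nn_integral_cmult_indicator[OF Ioc] emeasure_arclen_Ioc[OF st] by simp
  also have "\<dots> \<le> weighted_length s t" unfolding weighted_length_def
    using density by (intro nn_integral_mono) (auto simp: indicator_def intro: ennreal_leI)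
  finally show "ennreal c1 * curve_length d \<gamma> s t \<le> weighted_length s t" .
  have "weighted_length s t \<le> (\<integral>\<^sup>+u. ennreal c2 * indicator {s<..t} u \<partial>interval_measure (arclen d \<gamma>))"
    unfolding weighted_length_def
    using density by (intro nn_integral_mono) (auto simp: indicator_def intro: ennreal_leI)
  also have "\<dots> = ennreal c2 * curve_length d \<gamma> s t"
    using nn_integral_cmult_indicator[OF Ioc] emeasure_arclen_Ioc[OF st] by simp
  finally show "weighted_length s t \<le> ennreal c2 * curve_length d \<gamma> s t" .
qed

lemma weighted_length_add:
  assumes "s \<le> m" "m \<le> t"
  shows "weighted_length s t = weighted_length s m + weighted_length m t"
proof -
  have "indicator {s<..t} u = indicator {s<..m} u + (indicator {m<..t} u :: ennreal)" for u
    using assms by (auto simp: indicator_def)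
  then show ?thesis unfolding weighted_length_def
    by (simp add: distrib_left nn_integral_add)
qed

lemma weighted_length_finite:
  assumes st: "0 \<le> s" "s \<le> t" "t \<le> 1"
  shows "weighted_length s t < \<infinity>"
proof -
  have "1 / (N (\<gamma> u))^2 \<le> 1" for u
    using N_ge_1[of "\<gamma> u"] by (simp add: divide_le_eq one_le_power)
  then have "weighted_length s t \<le> ennreal 1 * curve_length d \<gamma> s t"
    by (intro weighted_length_bounds(2)[OF st, of 0]) auto
  then show ?thesis using length_finite[OF st] by (simp add: le_less_trans)
qed

definition real_length :: "real \<Rightarrow> real \<Rightarrow> real" where
  "real_length s t = enn2real (curve_length d \<gamma> s t)"

definition real_hat_length :: "real \<Rightarrow> real \<Rightarrow> real" where
  "real_hat_length s t = enn2real (curve_length (hat_d d a) \<gamma>h s t)"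

definition real_weighted_length :: "real \<Rightarrow> real \<Rightarrow> real" where
  "real_weighted_length s t = enn2real (weighted_length s t)"

lemma real_lengths_add:
  assumes "0 \<le> s" "s \<le> m" "m \<le> t" "t \<le> 1"
  shows "real_length s t = real_length s m + real_length m t"
    and "real_hat_length s t = real_hat_length s m + real_hat_length m t"
    and "real_weighted_length s t = real_weighted_length s m + real_weighted_length m t"
  using d.curve_length_add[of s m t \<gamma>] hat.curve_length_add[of s m t \<gamma>h] weighted_length_add[of s m t]
    length_finite hat_length_finite weighted_length_finite assms
  unfolding real_length_def real_hat_length_def real_weighted_length_def
  by (simp_all add: enn2real_plus)

text \<open>On a piece along which N is almost constant, both the hat length and the weighted length
  lie between the d-length multiplied by the extreme values of 1 / N^2.\<close>
lemma real_hat_length_approx: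
  assumes \<rho>: "0 < \<rho>" "\<rho> \<le> 1/4" and st: "0 \<le> s" "s \<le> t" "t \<le> 1"
    and near: "\<And>u. s \<le> u \<Longrightarrow> u \<le> t \<Longrightarrow> d (\<gamma> s) (\<gamma> u) < \<rho>"
  shows "\<bar>real_hat_length s t - real_weighted_length s t\<bar> \<le> 32 * \<rho> * real_length s t"
proof -
  define N0 where "N0 = N (\<gamma> s)"
  define c1 where "c1 = 1 / (N0 + 5 * \<rho>)^2"
  define c2 where "c2 = 1 / (N0 - \<rho>)^2"
  define c3 where "c3 = 1 / (N0 + \<rho>)^2"
  have N0: "1 \<le> N0" unfolding N0_def by (rule N_ge_1)
  have c: "0 \<le> c1" "0 \<le> c2" "0 \<le> c3" unfolding c1_def c2_def c3_def by auto
  have L: "0 \<le> real_length s t" unfolding real_length_def by simp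
  have hat_lower: "c1 * real_length s t \<le> real_hat_length s t"
    unfolding real_length_def real_hat_length_def c1_def N0_def
    using curve_length_lift_local(1)[of \<gamma>h \<gamma>, OF lift \<rho> st near]
    by (intro enn2real_cmult_le length_finite hat_length_finite st) auto
  have hat_upper: "real_hat_length s t \<le> c2 * real_length s t"
    unfolding real_length_def real_hat_length_def c2_def N0_def
    using curve_length_lift_local(2)[of \<gamma>h \<gamma>, OF lift \<rho> st near]
    by (intro enn2real_le_cmult length_finite st) auto
  have bounds: "c3 \<le> 1 / (N (\<gamma> u))^2 \<and> 1 / (N (\<gamma> u))^2 \<le> c2" if "s < u" "u \<le> t" for u
  proof -
    have "N0 - \<rho> \<le> N (\<gamma> u)" "N (\<gamma> u) \<le> N0 + \<rho>"
      using N_lipschitz[where x="\<gamma> s" and y="\<gamma> u"] near[of u] that unfolding N0_def by auto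
    then show ?thesis
      unfolding c2_def c3_def using N_pos[of "\<gamma> u"] N0 \<rho>
      by (auto intro!: divide_left_mono power_mono)
  qed
  have weighted_lower: "c3 * real_length s t \<le> real_weighted_length s t"
    unfolding real_length_def real_weighted_length_def
    by (intro enn2real_cmult_le length_finite weighted_length_finite st
        weighted_length_bounds(1)[OF st c(3)] c(3)) (use bounds in auto)
  have weighted_upper: "real_weighted_length s t \<le> c2 * real_length s t"
    unfolding real_length_def real_weighted_length_def
    by (intro enn2real_le_cmult length_finite st weighted_length_bounds(2)[OF st c(3)] c(2))
       (use bounds in auto)
  have "c1 \<le> c3" unfolding c1_def c3_def using N0 \<rho> by (intro divide_left_mono power_mono) auto
  then have "\<bar>real_hat_length s t - real_weighted_length s t\<bar> \<le> (c2 - c1) * real_length s t"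
    using hat_lower hat_upper weighted_lower weighted_upper mult_right_mono[OF _ L, of c1 c3]
    by (simp add: left_diff_distrib abs_le_iff)
  also have "\<dots> \<le> 32 * \<rho> * real_length s t"
    using inverse_square_gap_le[OF N0 \<rho>] L unfolding c1_def c2_def by (intro mult_right_mono) auto
  finally show ?thesis .
qed

lemma real_hat_length_eq:
  assumes st: "0 \<le> s" "s \<le> t" "t \<le> 1"
  shows "real_hat_length s t = real_weighted_length s t"
proof -
  let ?P = "\<lambda>\<rho> s t. \<bar>real_hat_length s t - real_weighted_length s t\<bar> \<le> 32 * \<rho> * real_length s t"
  have estimate: "?P \<rho> s t" if \<rho>: "0 < \<rho>" "\<rho> \<le> 1/4" for \<rho>
  proof -
    obtain \<delta> where \<delta>: "\<delta> > 0"
      "\<And>s t u. 0 \<le> s \<Longrightarrow> t \<le> 1 \<Longrightarrow> t - s < \<delta> \<Longrightarrow> s \<le> u \<Longrightarrow> u \<le> t \<Longrightarrow> d (\<gamma> s) (\<gamma> u) < \<rho>"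
      using curve_stays_near[OF curve \<rho>(1)] by auto
    show ?thesis
    proof (rule interval_property_by_small_steps[where P = "?P \<rho>", OF \<delta>(1)])
      fix s t assume "0 \<le> s" "s \<le> t" "t \<le> 1" "t - s < \<delta>"
      then show "?P \<rho> s t" by (intro real_hat_length_approx[OF \<rho>]) (use \<delta>(2) in auto)
    next
      fix s m t assume "0 \<le> s" "s \<le> m" "m \<le> t" "t \<le> 1" "?P \<rho> s m" "?P \<rho> m t"
      then show "?P \<rho> s t"
        using real_lengths_add[of s m t] by (simp add: abs_le_iff algebra_simps)
    qed (use st in auto)
  qed
  show ?thesis
  proof (rule ccontr)
    assume ne: "real_hat_length s t \<noteq> real_weighted_length s t"
    define e where "e = \<bar>real_hat_length s t - real_weighted_length s t\<bar>"
    define L where "L = real_length s t"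
    have e: "0 < e" unfolding e_def using ne by simp
    have L: "0 \<le> L" unfolding L_def real_length_def by simp
    define \<rho> where "\<rho> = min (1/4) (e / (64 * (L + 1)))"
    have "0 < \<rho>" unfolding \<rho>_def using e L by auto
    moreover have "\<rho> \<le> 1/4" unfolding \<rho>_def by (rule min.cobounded1)
    ultimately have \<rho>: "0 < \<rho>" "\<rho> \<le> 1/4" by blast+
    have "32 * \<rho> * L \<le> 32 * (e / (64 * (L + 1))) * L"
      using L e unfolding \<rho>_def by (intro mult_right_mono mult_left_mono min.cobounded2) auto
    also have "\<dots> = e * (L / (2 * (L + 1)))" using L by (simp add: field_simps)
    also have "\<dots> < e * 1" using L e by (intro mult_strict_left_mono) (auto simp: field_simps)
    finally show False using estimate[OF \<rho>] unfolding e_def L_def by simp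
  qed
qed

lemma curve_length_hat_eq_weighted_length:
  assumes "0 \<le> s" "s \<le> t" "t \<le> 1"
  shows "curve_length (hat_d d a) \<gamma>h s t = weighted_length s t"
proof -
  have "curve_length (hat_d d a) \<gamma>h s t = ennreal (real_hat_length s t)"
    unfolding real_hat_length_def using hat_length_finite[OF assms] by simp
  moreover have "weighted_length s t = ennreal (real_weighted_length s t)"
    unfolding real_weighted_length_def using weighted_length_finite[OF assms] by simp
  ultimately show ?thesis using real_hat_length_eq[OF assms] by simp
qed

end

lemma (in pseudometric) AE_arclen_in_unit_interval:
  assumes rect: "d_rectifiable dd \<gamma>"
  shows "AE u in interval_measure (arclen dd \<gamma>). u \<in> {0<..1}"
proof -
  let ?M = "interval_measure (arclen dd \<gamma>)"
  have null: "{a<..b} \<in> null_sets ?M" if "a \<le> b" "b \<le> 0 \<or> 1 \<le> a" for a b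
  proof -
    have "clamp01 a = clamp01 b" using that unfolding clamp01_def by auto
    then show ?thesis
      using emeasure_arclen_Ioc[OF rect that(1)] curve_length_point by (simp add: null_setsI)
  qed
  have "AE u in ?M. u \<notin> (\<Union>n::nat. {- real n<..0})"
    by (intro AE_not_in null_sets_UN null) auto
  moreover have "AE u in ?M. u \<notin> (\<Union>n::nat. {1<..1 + real n})"
    by (intro AE_not_in null_sets_UN null) auto
  ultimately show ?thesis
  proof eventually_elim
    case (elim u)
    obtain n :: nat where n: "- u < real n" "u - 1 < real n"
      using reals_Archimedean2[of "max (- u) (u - 1)"] by auto
    have "u \<notin> {- real n<..0}" "u \<notin> {1<..1 + real n}" using elim by blast+
    then show ?case using n by auto
  qed
qed

context lifted_curve
begin

lemma emeasure_density_arc_density_Ioc: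
  assumes st: "s \<le> t"
  shows "emeasure (density (interval_measure (arclen d \<gamma>)) arc_density) {s<..t}
       = curve_length (hat_d d a) \<gamma>h (clamp01 s) (clamp01 t)"
proof -
  have "emeasure (density (interval_measure (arclen d \<gamma>)) arc_density) {s<..t}
      = (\<integral>\<^sup>+u. ennreal (arc_density u) * indicator {s<..t} u \<partial>interval_measure (arclen d \<gamma>))"
    by (rule emeasure_density) auto
  also have "\<dots> = weighted_length (clamp01 s) (clamp01 t)" unfolding weighted_length_def
    using d.AE_arclen_in_unit_interval[OF rect]
    by (intro nn_integral_cong_AE, eventually_elim) (auto simp: indicator_def clamp01_def)
  also have "\<dots> = curve_length (hat_d d a) \<gamma>h (clamp01 s) (clamp01 t)"
    using clamp01_bounds clamp01_mono[OF st]
    by (intro curve_length_hat_eq_weighted_length[symmetric]) auto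
  finally show ?thesis .
qed

lemma interval_measure_arclen_hat:
  "interval_measure (arclen (hat_d d a) \<gamma>h) = density (interval_measure (arclen d \<gamma>)) arc_density"
proof (rule measure_eqI_generator_eq[where E = "range (\<lambda>(a, b). {a<..b::real})" and \<Omega> = UNIV
      and A = "\<lambda>i. {- real i<..real i}"])
  show "Int_stable (range (\<lambda>(a, b). {a<..b::real}))"
  proof (rule Int_stableI)
    fix X Y assume "X \<in> range (\<lambda>(a, b). {a<..b::real})" "Y \<in> range (\<lambda>(a, b). {a<..b::real})"
    then obtain a b c e where "X = {a<..b}" "Y = {c<..e}" by auto
    then have "X \<inter> Y = (\<lambda>(a, b). {a<..b::real}) (max a c, min b e)" by auto
    then show "X \<inter> Y \<in> range (\<lambda>(a, b). {a<..b::real})" by blast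
  qed
  have "sets borel = sigma_sets UNIV (range (\<lambda>(a, b). {a<..b::real}))"
    by (subst borel_sigma_sets_Ioc) (simp add: sets_measure_of)
  then show "sets (interval_measure (arclen (hat_d d a) \<gamma>h)) = sigma_sets UNIV (range (\<lambda>(a, b). {a<..b::real}))"
    and "sets (density (interval_measure (arclen d \<gamma>)) arc_density) = sigma_sets UNIV (range (\<lambda>(a, b). {a<..b::real}))"
    by simp_all
  show "range (\<lambda>(a, b). {a<..b::real}) \<subseteq> Pow UNIV" by simp
  show "range (\<lambda>i. {- real i<..real i}) \<subseteq> range (\<lambda>(a, b). {a<..b::real})"
    by (auto intro!: image_eqI[where x="(- real i, real i)" for i])
  have "u \<in> (\<Union>i. {- real i<..real i})" for u :: real
  proof -
    obtain n :: nat where "\<bar>u\<bar> < real n" using reals_Archimedean2 by blast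
    then show ?thesis by (auto intro!: exI[of _ n])
  qed
  then show "(\<Union>i. {- real i<..real i}) = UNIV" by blast
  fix i :: nat
  show "emeasure (interval_measure (arclen (hat_d d a) \<gamma>h)) {- real i<..real i} \<noteq> \<infinity>"
    using hat.emeasure_arclen_Ioc[OF hat_rect, of "- real i" "real i"] clamp01_bounds
      hat_length_finite[of "clamp01 (- real i)" "clamp01 (real i)"] clamp01_mono[of "- real i" "real i"]
    by auto
next
  fix X assume "X \<in> range (\<lambda>(a, b). {a<..b::real})"
  then obtain s t where X: "X = {s<..t}" by auto
  show "emeasure (interval_measure (arclen (hat_d d a) \<gamma>h)) X
      = emeasure (density (interval_measure (arclen d \<gamma>)) arc_density) X"
    unfolding X using hat.emeasure_arclen_Ioc[OF hat_rect] emeasure_density_arc_density_Ioc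
    by (cases "s \<le> t") auto
qed

end

section \<open>Line integrals along lifted curves\<close>

text \<open>Unlike their library counterparts, the next three facts do not require the integrand to be
  measurable.\<close>
lemma nn_integral_le_of_measurable:
  assumes "\<And>g. g \<in> borel_measurable M \<Longrightarrow> g \<le> f \<Longrightarrow> integral\<^sup>N M g \<le> X"
  shows "integral\<^sup>N M f \<le> X"
  unfolding nn_integral_def
proof (rule SUP_least)
  fix g assume "g \<in> {g. simple_function M g \<and> g \<le> f}"
  then show "integral\<^sup>S M g \<le> X"
    using assms by (auto simp: nn_integral_eq_simple_integral[symmetric] intro: borel_measurable_simple_function)
qed

lemma cmult_nn_integral_le: "ennreal c * integral\<^sup>N M f \<le> (\<integral>\<^sup>+x. ennreal c * f x \<partial>M)"
  unfolding nn_integral_def[of M f] SUP_mult_left_ennreal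
proof (rule SUP_least)
  fix g assume g: "g \<in> {g. simple_function M g \<and> g \<le> f}"
  then have "ennreal c * integral\<^sup>S M g = (\<integral>\<^sup>+x. ennreal c * g x \<partial>M)"
    by (simp add: nn_integral_eq_simple_integral)
  also have "\<dots> \<le> (\<integral>\<^sup>+x. ennreal c * f x \<partial>M)"
    using g by (intro nn_integral_mono mult_left_mono) (auto simp: le_fun_def)
  finally show "ennreal c * integral\<^sup>S M g \<le> (\<integral>\<^sup>+x. ennreal c * f x \<partial>M)" .
qed

lemma nn_integral_density_pos:
  assumes c: "c \<in> borel_measurable M" and pos: "\<And>x. 0 < c x"
  shows "integral\<^sup>N (density M (\<lambda>x. ennreal (c x))) f = (\<integral>\<^sup>+x. ennreal (c x) * f x \<partial>M)"
proof (rule antisym)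
  show "integral\<^sup>N (density M (\<lambda>x. ennreal (c x))) f \<le> (\<integral>\<^sup>+x. ennreal (c x) * f x \<partial>M)"
  proof (rule nn_integral_le_of_measurable)
    fix g assume g: "g \<in> borel_measurable (density M (\<lambda>x. ennreal (c x)))" "g \<le> f"
    have "integral\<^sup>N (density M (\<lambda>x. ennreal (c x))) g = (\<integral>\<^sup>+x. ennreal (c x) * g x \<partial>M)"
      using g(1) c by (intro nn_integral_density) auto
    also have "\<dots> \<le> (\<integral>\<^sup>+x. ennreal (c x) * f x \<partial>M)"
      using g(2) by (intro nn_integral_mono mult_left_mono) (auto simp: le_fun_def)
    finally show "integral\<^sup>N (density M (\<lambda>x. ennreal (c x))) g \<le> (\<integral>\<^sup>+x. ennreal (c x) * f x \<partial>M)" .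
  qed
  show "(\<integral>\<^sup>+x. ennreal (c x) * f x \<partial>M) \<le> integral\<^sup>N (density M (\<lambda>x. ennreal (c x))) f"
  proof (rule nn_integral_le_of_measurable)
    fix h assume h: "h \<in> borel_measurable M" "h \<le> (\<lambda>x. ennreal (c x) * f x)"
    define g where "g x = ennreal (1 / c x) * h x" for x
    have one: "ennreal (c x) * ennreal (1 / c x) = 1" for x
      using pos[of x] by (simp flip: ennreal_mult)
    have "g x \<le> f x" for x
    proof -
      have "g x \<le> ennreal (1 / c x) * (ennreal (c x) * f x)"
        unfolding g_def using h(2) by (intro mult_left_mono) (auto simp: le_fun_def)
      then show ?thesis by (simp add: mult.assoc[symmetric] one mult.commute[of "ennreal (1 / c x)"])
    qed
    moreover have "integral\<^sup>N M h = (\<integral>\<^sup>+x. ennreal (c x) * g x \<partial>M)"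
      unfolding g_def by (simp add: mult.assoc[symmetric] one)
    moreover have "\<dots> = integral\<^sup>N (density M (\<lambda>x. ennreal (c x))) g"
      unfolding g_def using h(1) c by (intro nn_integral_density[symmetric]) auto
    ultimately show "integral\<^sup>N M h \<le> integral\<^sup>N (density M (\<lambda>x. ennreal (c x))) f"
      by (metis le_funI nn_integral_mono)
  qed
qed

lemma (in sphericalization) ennreal_N_powr_mult:
  "ennreal (N x powr e1) * ennreal (N x powr e2) = ennreal (N x powr (e1 + e2))"
  by (simp add: powr_add flip: ennreal_mult)

context lifted_curve
begin

lemma line_int_lift:
  "line_int (hat_d d a) f \<gamma>h = line_int d (\<lambda>x. f (Some x) * ennreal (N x powr -2)) \<gamma>"
proof -
  have "line_int (hat_d d a) f \<gamma>h
      = (\<integral>\<^sup>+t. ennreal (arc_density t) * (f (\<gamma>h t) * indicator {0..1} t) \<partial>interval_measure (arclen d \<gamma>))"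
    unfolding line_int_def interval_measure_arclen_hat
    by (rule nn_integral_density_pos[OF arc_density_measurable arc_density_pos])
  also have "\<dots> = line_int d (\<lambda>x. f (Some x) * ennreal (N x powr -2)) \<gamma>"
    unfolding line_int_def
  proof (intro nn_integral_cong)
    fix t
    have "arc_density t = N (\<gamma> t) powr -2" if "t \<in> {0..1}"
      using that N_pos[of "\<gamma> t"] unfolding arc_density_def
      by (simp add: clamp01_id powr_minus_divide powr_numeral)
    then show "ennreal (arc_density t) * (f (\<gamma>h t) * indicator {0..1} t)
        = f (Some (\<gamma> t)) * ennreal (N (\<gamma> t) powr -2) * indicator {0..1} t"
      using lift[of t] by (cases "t \<in> {0..1}") (simp_all add: mult.commute)
  qed
  finally show ?thesis .
qed

lemma N_bounded_on_curve:
  obtains K where "\<And>t. 0 \<le> t \<Longrightarrow> t \<le> 1 \<Longrightarrow> N (\<gamma> t) \<le> K"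
proof
  fix t :: real assume t: "0 \<le> t" "t \<le> 1"
  have "ennreal (d (\<gamma> 0) (\<gamma> t)) \<le> curve_length d \<gamma> 0 1"
    using d.dist_le_curve_length[OF t(1)] d.curve_length_mono[of 0 0 t 1 \<gamma>] t by (auto intro: order_trans)
  from enn2real_mono[OF this] have "d (\<gamma> 0) (\<gamma> t) \<le> enn2real (curve_length d \<gamma> 0 1)"
    using length_finite[of 0 1] d_nonneg by simp
  then show "N (\<gamma> t) \<le> N (\<gamma> 0) + enn2real (curve_length d \<gamma> 0 1)"
    using N_lipschitz(1)[where x="\<gamma> 0" and y="\<gamma> t"] by simp
qed

text \<open>N is bounded above and below along the curve, so any power weight is bounded away
  from 0 on it and cannot make an infinite line integral finite.\<close>
lemma line_int_powr_weight_infinite: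
  assumes inf: "line_int d F \<gamma> = \<infinity>"
  shows "line_int d (\<lambda>x. F x * ennreal (N x powr e)) \<gamma> = \<infinity>"
proof -
  obtain K where K: "\<And>t. 0 \<le> t \<Longrightarrow> t \<le> 1 \<Longrightarrow> N (\<gamma> t) \<le> K" using N_bounded_on_curve by blast
  have K1: "1 \<le> K" using K[of 0] N_ge_1[of "\<gamma> 0"] by simp
  define c where "c = K powr (- \<bar>e\<bar>)"
  have c: "0 < c" unfolding c_def using K1 by simp
  have c_le: "c \<le> N (\<gamma> t) powr e" if "0 \<le> t" "t \<le> 1" for t
  proof -
    have "c \<le> N (\<gamma> t) powr (- \<bar>e\<bar>)"
      unfolding c_def using K[OF that] N_ge_1[of "\<gamma> t"] by (intro powr_mono2') auto
    also have "\<dots> \<le> N (\<gamma> t) powr e" using N_ge_1[of "\<gamma> t"] by (intro powr_mono) auto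
    finally show ?thesis .
  qed
  have "\<infinity> = ennreal c * line_int d F \<gamma>" using inf c by (simp add: ennreal_mult_top)
  also have "\<dots> \<le> (\<integral>\<^sup>+t. ennreal c * (F (\<gamma> t) * indicator {0..1} t) \<partial>interval_measure (arclen d \<gamma>))"
    unfolding line_int_def by (rule cmult_nn_integral_le)
  also have "\<dots> \<le> line_int d (\<lambda>x. F x * ennreal (N x powr e)) \<gamma>"
    unfolding line_int_def
  proof (intro nn_integral_mono)
    fix t
    have "ennreal c * F (\<gamma> t) \<le> F (\<gamma> t) * ennreal (N (\<gamma> t) powr e)" if "t \<in> {0..1}"
    proof -
      have "ennreal c \<le> ennreal (N (\<gamma> t) powr e)" using c_le that by (intro ennreal_leI) auto
      then have "ennreal c * F (\<gamma> t) \<le> ennreal (N (\<gamma> t) powr e) * F (\<gamma> t)"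
        by (rule mult_right_mono) simp
      then show ?thesis by (simp add: mult.commute)
    qed
    then show "ennreal c * (F (\<gamma> t) * indicator {0..1} t) \<le> F (\<gamma> t) * ennreal (N (\<gamma> t) powr e) * indicator {0..1} t"
      by (cases "t \<in> {0..1}") (simp_all add: mult.assoc)
  qed
  finally show ?thesis by (simp add: top_unique)
qed

end

lemma (in lifted_curve) line_int_lift_powr:
  "line_int (hat_d d a) (case_option 0 (\<lambda>x. f x * ennreal (N x powr e))) \<gamma>h
     = line_int d (\<lambda>x. f x * ennreal (N x powr (e - 2))) \<gamma>"
  unfolding line_int_lift by (simp add: mult.assoc ennreal_N_powr_mult)

lemma (in lifted_curve) line_int_lift_N_square:
  "line_int (hat_d d a) (case_option 0 (\<lambda>x. g x * ennreal ((N x)^2))) \<gamma>h = line_int d g \<gamma>"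
proof -
  have "(N x)^2 = N x powr 2" "N x powr (2 - 2) = 1" for x
    using N_pos[of x] by (simp_all add: powr_numeral)
  then show ?thesis using line_int_lift_powr[of g 2] by simp
qed

context sphericalization
begin

lemma nonconstant_curve_lift_iff:
  assumes "\<And>t. 0 \<le> t \<Longrightarrow> t \<le> 1 \<Longrightarrow> \<gamma>h t = Some (\<gamma> t)"
  shows "nonconstant_curve \<gamma>h \<longleftrightarrow> nonconstant_curve \<gamma>"
  using assms unfolding nonconstant_curve_def by auto

lemma curve_in_Some_image:
  assumes "\<gamma>h ` {0..1} \<subseteq> Some ` E"
  obtains \<gamma> where "\<And>t. 0 \<le> t \<Longrightarrow> t \<le> 1 \<Longrightarrow> \<gamma>h t = Some (\<gamma> t)" "\<gamma> ` {0..1} \<subseteq> E"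
proof
  show "\<gamma>h t = Some (the (\<gamma>h t))" if "0 \<le> t" "t \<le> 1" for t
  proof -
    have "\<gamma>h t \<in> Some ` E" using assms that by auto
    then show ?thesis by auto
  qed
  then show "(\<lambda>t. the (\<gamma>h t)) ` {0..1} \<subseteq> E" using assms by force
qed

end

section \<open>Measurability and the sphericalized measure\<close>

lemma space_d_borel[simp]: "space (d_borel dd) = UNIV"
  unfolding d_borel_def by (simp add: space_measure_of_conv)

lemma d_open_in_d_borel: "d_open dd U \<Longrightarrow> U \<in> sets (d_borel dd)"
  unfolding d_borel_def by (simp add: sets_measure_of_conv)

lemma measurable_d_borelI:
  assumes "\<And>U. d_open dd U \<Longrightarrow> f -` U \<inter> space M \<in> sets M"
  shows "f \<in> measurable M (d_borel dd)"
  unfolding d_borel_def by (rule measurable_measure_of) (use assms in auto)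

context sphericalization
begin

lemma borel_measurable_N[measurable]: "N \<in> borel_measurable (d_borel d)"
proof -
  have "d_open d {x. d x a < c}" for c
    unfolding d_open_def dball_def
  proof
    fix x assume "x \<in> {x. d x a < c}"
    moreover have "{y. d x y < c - d x a} \<subseteq> {x. d x a < c}"
    proof
      fix y assume "y \<in> {y. d x y < c - d x a}"
      then show "y \<in> {x. d x a < c}" using d_triangle[where x=y and y=x and z=a] d_sym[of x y] by simp
    qed
    ultimately show "\<exists>r>0. {y. d x y < r} \<subseteq> {x. d x a < c}"
      by (intro exI[of _ "c - d x a"]) auto
  qed
  then have "(\<lambda>x. d x a) \<in> borel_measurable (d_borel d)"
    unfolding borel_measurable_iff_less using d_open_in_d_borel by fastforce
  then show ?thesis unfolding N_def[abs_def] by measurable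
qed

lemma borel_measurable_N_powr[measurable]: "(\<lambda>x. ennreal (N x powr e)) \<in> borel_measurable (d_borel d)"
proof -
  have "(\<lambda>r::real. ennreal (r powr e)) \<in> borel_measurable borel" by measurable
  then show ?thesis using measurable_compose[OF borel_measurable_N] by blast
qed

lemma d_open_Some_image: "d_open d V \<Longrightarrow> d_open (hat_d d a) (Some ` V)"
  unfolding d_open_def dball_def
proof (intro ballI)
  fix z assume V: "\<forall>x\<in>V. \<exists>r>0. {y. d x y < r} \<subseteq> V" and "z \<in> Some ` V"
  then obtain x r where x: "z = Some x" "r > 0" "{y. d x y < r} \<subseteq> V" by auto
  obtain \<epsilon> where "\<epsilon> > 0" "\<And>w. hat_d d a (Some x) w < \<epsilon> \<Longrightarrow> \<exists>y. w = Some y \<and> d x y < r"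
    using small_hat_ball_Some[OF x(2)] by blast
  then show "\<exists>r>0. {y. hat_d d a z y < r} \<subseteq> Some ` V" using x by blast
qed

lemma measurable_Some: "Some \<in> measurable (d_borel d) (d_borel (hat_d d a))"
proof (rule measurable_d_borelI)
  fix U assume U: "d_open (hat_d d a) U"
  have "d_open d (Some -` U)" unfolding d_open_def dball_def
  proof
    fix x assume "x \<in> Some -` U"
    then obtain r where "r > 0" "{z. hat_d d a (Some x) z < r} \<subseteq> U"
      using U unfolding d_open_def dball_def by auto
    moreover have "{y. d x y < r} \<subseteq> Some -` U" if "{z. hat_d d a (Some x) z < r} \<subseteq> U"
    proof
      fix y assume "y \<in> {y. d x y < r}"
      then have "hat_d d a (Some x) (Some y) < r" using hat_d_le_d[of x y] by simp
      then show "y \<in> Some -` U" using that by auto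
    qed
    ultimately show "\<exists>r>0. {y. d x y < r} \<subseteq> Some -` U" by blast
  qed
  then show "Some -` U \<inter> space (d_borel d) \<in> sets (d_borel d)" using d_open_in_d_borel by simp
qed

lemma measurable_case_option:
  assumes h: "h \<in> borel_measurable (d_borel d)"
  shows "case_option (0::ennreal) h \<in> borel_measurable (d_borel (hat_d d a))"
proof -
  have S: "Some ` V \<in> sets (d_borel (hat_d d a))" if "d_open d V" for V
    by (intro d_open_in_d_borel d_open_Some_image that)
  have "d_open d UNIV" unfolding d_open_def dball_def by (auto intro: exI[of _ 1])
  then have Some_range: "range Some \<in> sets (d_borel (hat_d d a))" using S by blast
  then have None: "{None} \<in> sets (d_borel (hat_d d a))"
  proof -
    have "UNIV - range Some \<in> sets (d_borel (hat_d d a))" using sets.compl_sets[OF Some_range] by simp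
    moreover have "UNIV - range Some = {None}" using notin_range_Some by blast
    ultimately show ?thesis by metis
  qed
  have "(\<lambda>z. case z of Some x \<Rightarrow> x | None \<Rightarrow> a) \<in> measurable (d_borel (hat_d d a)) (d_borel d)"
  proof (rule measurable_d_borelI)
    fix V assume "d_open d V"
    moreover have "(\<lambda>z. case z of Some x \<Rightarrow> x | None \<Rightarrow> a) -` V = Some ` V \<union> (if a \<in> V then {None} else {})"
      by (auto split: option.splits)
    ultimately show "(\<lambda>z. case z of Some x \<Rightarrow> x | None \<Rightarrow> a) -` V \<inter> space (d_borel (hat_d d a))
        \<in> sets (d_borel (hat_d d a))" using sets.Un[OF S None] S by auto
  qed
  from measurable_compose[OF this h]
  have "(\<lambda>z. indicator (range Some) z * h (case z of Some x \<Rightarrow> x | None \<Rightarrow> a))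
      \<in> borel_measurable (d_borel (hat_d d a))"
    using Some_range by measurable
  also have "(\<lambda>z. indicator (range Some) z * h (case z of Some x \<Rightarrow> x | None \<Rightarrow> a)) = case_option 0 h"
    by (auto simp: indicator_def split: option.splits)
  finally show ?thesis .
qed

end

lemma epowr_mult_ennreal:
  assumes "0 < c" "0 < p"
  shows "epowr (x * ennreal c) p = epowr x p * ennreal (c powr p)"
proof (cases "x = \<infinity>")
  case True
  then show ?thesis using assms unfolding epowr_def by (simp add: ennreal_mult_eq_top_iff)
next
  case False
  then obtain r where r: "x = ennreal r" "0 \<le> r" by (cases x) auto
  then show ?thesis using assms unfolding epowr_def
    by (simp add: powr_mult ennreal_mult[symmetric] ennreal_mult_eq_top_iff)
qed

lemma borel_measurable_epowr[measurable]:
  assumes [measurable]: "f \<in> borel_measurable M"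
  shows "(\<lambda>z. epowr (f z) p) \<in> borel_measurable M"
  unfolding epowr_def by measurable

locale sphericalized_measure = sphericalization d a for d :: "'a \<Rightarrow> 'a \<Rightarrow> real" and a :: 'a +
  fixes \<mu> :: "'a measure" and q :: real
  assumes space_\<mu>: "space \<mu> = UNIV" and sets_d_borel_subset: "sets (d_borel d) \<subseteq> sets \<mu>"
begin

lemma d_borel_measurable_imp: "f \<in> borel_measurable (d_borel d) \<Longrightarrow> f \<in> borel_measurable \<mu>"
  using measurable_mono[of borel borel "d_borel d" \<mu>] sets_d_borel_subset space_\<mu> by auto

definition lifted_sets :: "'a option set set" where
  "lifted_sets = {A. Some -` A \<in> sets \<mu>}"

lemma sigma_algebra_lifted_sets: "sigma_algebra UNIV lifted_sets"
  unfolding sigma_algebra_iff2 lifted_sets_def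
proof (intro conjI ballI allI impI)
  fix A assume "A \<in> {A. Some -` A \<in> sets \<mu>}"
  then have "space \<mu> - Some -` A \<in> sets \<mu>" by auto
  then show "UNIV - A \<in> {A. Some -` A \<in> sets \<mu>}" using space_\<mu> by (simp add: vimage_Diff)
next
  fix A :: "nat \<Rightarrow> 'a option set" assume "range A \<subseteq> {A. Some -` A \<in> sets \<mu>}"
  then show "(\<Union>i. A i) \<in> {A. Some -` A \<in> sets \<mu>}" by (auto simp: vimage_Union)
qed auto

definition lifted_space :: "'a option measure" where
  "lifted_space = measure_of UNIV lifted_sets (\<lambda>_. 0)"

lemma sets_lifted_space[simp]: "sets lifted_space = lifted_sets"
  and space_lifted_space[simp]: "space lifted_space = UNIV"
  unfolding lifted_space_def using sigma_algebra_lifted_sets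
  by (simp_all add: sets_measure_of_conv space_measure_of_conv sigma_algebra.sigma_sets_eq)

definition weight :: "'a \<Rightarrow> ennreal" where "weight x = ennreal (N x powr - q)"

lemma weight_measurable: "weight \<in> borel_measurable \<mu>"
  unfolding weight_def by (rule d_borel_measurable_imp) measurable

lemma measurable_Some_lifted_space: "Some \<in> measurable (density \<mu> weight) lifted_space"
  unfolding lifted_space_def
  by (rule measurable_measure_of) (auto simp: lifted_sets_def space_\<mu>)

lemma hat_mu_eq_distr: "hat_mu d \<mu> a q = distr (density \<mu> weight) lifted_space Some"
proof -
  let ?D = "distr (density \<mu> weight) lifted_space Some"
  have "hat_mu d \<mu> a q = measure_of UNIV lifted_sets (emeasure ?D)"
    unfolding hat_mu_def lifted_sets_def[symmetric]
  proof (rule measure_of_eq)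
    fix A assume "A \<in> sigma_sets UNIV lifted_sets"
    then have A: "A \<in> lifted_sets"
      using sigma_algebra.sigma_sets_eq[OF sigma_algebra_lifted_sets] by simp
    have "emeasure ?D A = emeasure (density \<mu> weight) (Some -` A)"
      using emeasure_distr[OF measurable_Some_lifted_space, of A] A space_\<mu> by simp
    also have "\<dots> = (\<integral>\<^sup>+x\<in>Some -` A. weight x \<partial>\<mu>)"
      using A weight_measurable unfolding lifted_sets_def by (simp add: emeasure_density mult.commute)
    also have "\<dots> = (\<integral>\<^sup>+x\<in>Some -` A. ennreal (1 / (1 + d x a) powr q) \<partial>\<mu>)"
      unfolding weight_def N_def using d_nonneg
      by (intro nn_integral_cong) (simp add: powr_minus_divide add_pos_nonneg)
    finally show "(\<integral>\<^sup>+x\<in>Some -` A. ennreal (1 / (1 + d x a) powr q) \<partial>\<mu>) = emeasure ?D A" ..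
  qed simp
  also have "\<dots> = ?D"
    by (metis measure_of_of_measure sets_distr space_distr sets_lifted_space space_lifted_space)
  finally show ?thesis .
qed

lemma space_hat_mu[simp]: "space (hat_mu d \<mu> a q) = UNIV"
  and sets_hat_mu: "sets (hat_mu d \<mu> a q) = lifted_sets"
  unfolding hat_mu_eq_distr by simp_all

lemma nn_integral_hat_mu:
  assumes F: "F \<in> borel_measurable (d_borel (hat_d d a))"
  shows "integral\<^sup>N (hat_mu d \<mu> a q) F = (\<integral>\<^sup>+x. weight x * F (Some x) \<partial>\<mu>)"
proof -
  have "sets (d_borel (hat_d d a)) \<subseteq> lifted_sets"
    using measurable_Some sets_d_borel_subset unfolding measurable_def lifted_sets_def by auto
  then have "F \<in> borel_measurable lifted_space"
    using measurable_mono[of borel borel "d_borel (hat_d d a)" lifted_space] F by auto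
  then have "integral\<^sup>N (hat_mu d \<mu> a q) F = (\<integral>\<^sup>+x. F (Some x) \<partial>density \<mu> weight)"
    unfolding hat_mu_eq_distr by (intro nn_integral_distr[OF measurable_Some_lifted_space]) simp
  also have "\<dots> = (\<integral>\<^sup>+x. weight x * F (Some x) \<partial>\<mu>)"
    using weight_measurable d_borel_measurable_imp[OF measurable_compose[OF measurable_Some F]]
    by (intro nn_integral_density) auto
  finally show ?thesis .
qed

lemma measurable_case_option_restrict:
  assumes E: "E \<in> sets \<mu>" and f: "f \<in> borel_measurable (restrict_space \<mu> E)"
  shows "case_option (0::ennreal) f \<in> borel_measurable (restrict_space (hat_mu d \<mu> a q) (Some ` E))"
  unfolding measurable_def
proof (intro CollectI conjI ballI)
  fix B :: "ennreal set" assume B: "B \<in> sets borel"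
  have "f -` B \<inter> E \<in> sets (restrict_space \<mu> E)"
    using f B E unfolding measurable_def by auto
  then have "f -` B \<inter> E \<in> sets \<mu>" using E by (auto simp: sets_restrict_space)
  then have "Some ` (f -` B \<inter> E) \<in> lifted_sets"
    unfolding lifted_sets_def by (simp add: inj_vimage_image_eq)
  moreover have "case_option 0 f -` B \<inter> space (restrict_space (hat_mu d \<mu> a q) (Some ` E))
      = Some ` E \<inter> Some ` (f -` B \<inter> E)"
    by (auto simp: space_restrict_space)
  ultimately show "case_option 0 f -` B \<inter> space (restrict_space (hat_mu d \<mu> a q) (Some ` E))
      \<in> sets (restrict_space (hat_mu d \<mu> a q) (Some ` E))"
    unfolding sets_restrict_space sets_hat_mu by auto
qed auto

end

section \<open>Transfer of weak upper gradients\<close>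

context sphericalized_measure
begin

lemma epowr_mult_N_powr:
  assumes "0 < p"
  shows "epowr (y * ennreal (N x powr e)) p = epowr y p * ennreal (N x powr (e * p))"
  using epowr_mult_ennreal[OF _ assms] N_pos[of x] by (simp add: powr_powr)

lemma lifted_curve_intro:
  "(\<And>t. 0 \<le> t \<Longrightarrow> t \<le> 1 \<Longrightarrow> \<gamma>h t = Some (\<gamma> t)) \<Longrightarrow> d_rectifiable d \<gamma> \<Longrightarrow> lifted_curve d \<gamma> \<gamma>h"
  by unfold_locales auto

text \<open>The test function is rescaled by N^(q/p), which compensates the density of hat_mu in
  the p-integral; the remaining factor N^(q/p - 2) along a curve is harmless.\<close>
lemma zero_p_modulus_lift:
  assumes p: "0 < p" and \<Gamma>: "zero_p_modulus d \<mu> p \<Gamma>"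
  shows "zero_p_modulus (hat_d d a) (hat_mu d \<mu> a q) p
           {\<gamma>h. \<exists>\<gamma>\<in>\<Gamma>. d_rectifiable d \<gamma> \<and> (\<forall>t\<in>{0..1}. \<gamma>h t = Some (\<gamma> t))}"
proof -
  obtain \<rho> where \<rho>: "\<rho> \<in> borel_measurable (d_borel d)" "(\<integral>\<^sup>+x. epowr (\<rho> x) p \<partial>\<mu>) < \<infinity>"
    "\<And>\<gamma>. \<gamma> \<in> \<Gamma> \<Longrightarrow> line_int d \<rho> \<gamma> = \<infinity>"
    using \<Gamma> unfolding zero_p_modulus_def by blast
  define \<rho>h where "\<rho>h = case_option 0 (\<lambda>x. \<rho> x * ennreal (N x powr (q / p)))"
  have \<rho>h: "\<rho>h \<in> borel_measurable (d_borel (hat_d d a))"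
    unfolding \<rho>h_def using \<rho>(1) borel_measurable_N_powr by (intro measurable_case_option) measurable
  have "weight x * epowr (\<rho>h (Some x)) p = epowr (\<rho> x) p" for x
    using p N_pos[of x] unfolding \<rho>h_def weight_def
    by (simp add: epowr_mult_N_powr mult.left_commute ennreal_N_powr_mult)
  then have "(\<integral>\<^sup>+z. epowr (\<rho>h z) p \<partial>hat_mu d \<mu> a q) = (\<integral>\<^sup>+x. epowr (\<rho> x) p \<partial>\<mu>)"
    using \<rho>h by (simp add: nn_integral_hat_mu)
  moreover have "line_int (hat_d d a) \<rho>h \<gamma>h = \<infinity>"
    if "\<gamma> \<in> \<Gamma>" "d_rectifiable d \<gamma>" "\<forall>t\<in>{0..1}. \<gamma>h t = Some (\<gamma> t)" for \<gamma> \<gamma>h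
  proof -
    interpret lifted_curve d a \<gamma> \<gamma>h by (rule lifted_curve_intro) (use that in auto)
    show ?thesis
      unfolding \<rho>h_def line_int_lift_powr by (rule line_int_powr_weight_infinite[OF \<rho>(3)[OF that(1)]])
  qed
  ultimately show ?thesis unfolding zero_p_modulus_def using \<rho>h \<rho>(2) by auto
qed

lemma zero_p_modulus_unlift:
  assumes p: "0 < p" and \<Gamma>h: "zero_p_modulus (hat_d d a) (hat_mu d \<mu> a q) p \<Gamma>h"
  shows "zero_p_modulus d \<mu> p {\<gamma>. d_rectifiable d \<gamma> \<and> (\<lambda>t. Some (\<gamma> t)) \<in> \<Gamma>h}"
proof -
  obtain \<rho>h where \<rho>h: "\<rho>h \<in> borel_measurable (d_borel (hat_d d a))"
    "(\<integral>\<^sup>+z. epowr (\<rho>h z) p \<partial>hat_mu d \<mu> a q) < \<infinity>" "\<And>\<gamma>h. \<gamma>h \<in> \<Gamma>h \<Longrightarrow> line_int (hat_d d a) \<rho>h \<gamma>h = \<infinity>"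
    using \<Gamma>h unfolding zero_p_modulus_def by blast
  define \<rho> where "\<rho> x = \<rho>h (Some x) * ennreal (N x powr (- q / p))" for x
  have \<rho>: "\<rho> \<in> borel_measurable (d_borel d)"
    unfolding \<rho>_def[abs_def] using measurable_compose[OF measurable_Some \<rho>h(1)] by measurable
  have "epowr (\<rho> x) p = weight x * epowr (\<rho>h (Some x)) p" for x
    using p unfolding \<rho>_def weight_def by (simp add: epowr_mult_N_powr mult.commute)
  then have "(\<integral>\<^sup>+x. epowr (\<rho> x) p \<partial>\<mu>) = (\<integral>\<^sup>+z. epowr (\<rho>h z) p \<partial>hat_mu d \<mu> a q)"
    using \<rho>h(1) by (simp add: nn_integral_hat_mu)
  moreover have "line_int d \<rho> \<gamma> = \<infinity>" if "d_rectifiable d \<gamma>" "(\<lambda>t. Some (\<gamma> t)) \<in> \<Gamma>h" for \<gamma>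
  proof -
    interpret lifted_curve d a \<gamma> "\<lambda>t. Some (\<gamma> t)" by (rule lifted_curve_intro) (use that in auto)
    have "line_int d (\<lambda>x. \<rho>h (Some x) * ennreal (N x powr -2)) \<gamma> = \<infinity>"
      using \<rho>h(3)[OF that(2)] unfolding line_int_lift .
    from line_int_powr_weight_infinite[OF this, of "2 - q / p"]
    show ?thesis unfolding \<rho>_def mult.assoc ennreal_N_powr_mult by simp
  qed
  ultimately show ?thesis unfolding zero_p_modulus_def using \<rho> \<rho>h(2) by auto
qed

lemma p_weak_upper_gradient_lift:
  assumes p: "0 < p" and E: "E \<in> sets \<mu>" and ug: "p_weak_upper_gradient d \<mu> p u g E"
  shows "p_weak_upper_gradient (hat_d d a) (hat_mu d \<mu> a q) p
           (case_option 0 u) (case_option 0 (\<lambda>x. g x * ennreal ((N x)^2))) (Some ` E)"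
proof -
  obtain \<Gamma> where g: "g \<in> borel_measurable (restrict_space \<mu> E)" and \<Gamma>: "zero_p_modulus d \<mu> p \<Gamma>"
    and ineq: "\<And>\<gamma>. d_rectifiable d \<gamma> \<Longrightarrow> nonconstant_curve \<gamma> \<Longrightarrow> \<gamma> ` {0..1} \<subseteq> E \<Longrightarrow> \<gamma> \<notin> \<Gamma> \<Longrightarrow>
               ug_ineq (u (\<gamma> 0)) (u (\<gamma> 1)) (line_int d g \<gamma>)"
    using ug unfolding p_weak_upper_gradient_def by blast
  define \<Gamma>h where "\<Gamma>h = {\<gamma>h. \<exists>\<gamma>\<in>\<Gamma>. d_rectifiable d \<gamma> \<and> (\<forall>t\<in>{0..1}. \<gamma>h t = Some (\<gamma> t))}"
  have "(\<lambda>x. g x * ennreal ((N x)^2)) \<in> borel_measurable (restrict_space \<mu> E)"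
    using g measurable_restrict_space1[OF d_borel_measurable_imp[OF borel_measurable_N]] by measurable
  moreover have "ug_ineq (case_option 0 u (\<gamma>h 0)) (case_option 0 u (\<gamma>h 1))
      (line_int (hat_d d a) (case_option 0 (\<lambda>x. g x * ennreal ((N x)^2))) \<gamma>h)"
    if hat_rect: "d_rectifiable (hat_d d a) \<gamma>h" and nonconst: "nonconstant_curve \<gamma>h"
      and image: "\<gamma>h ` {0..1} \<subseteq> Some ` E" and not_exceptional: "\<gamma>h \<notin> \<Gamma>h" for \<gamma>h
  proof -
    obtain \<gamma> where lift: "\<And>t. 0 \<le> t \<Longrightarrow> t \<le> 1 \<Longrightarrow> \<gamma>h t = Some (\<gamma> t)" and "\<gamma> ` {0..1} \<subseteq> E"
      using curve_in_Some_image[OF image] by blast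
    have rect: "d_rectifiable d \<gamma>" by (rule d_rectifiable_unlift[of \<gamma>h \<gamma>, OF lift hat_rect])
    interpret lifted_curve d a \<gamma> \<gamma>h by (rule lifted_curve_intro[OF lift rect])
    have "\<gamma> \<notin> \<Gamma>" using not_exceptional lift rect unfolding \<Gamma>h_def by auto
    then show ?thesis
      using ineq[OF rect _ \<open>\<gamma> ` {0..1} \<subseteq> E\<close>] nonconstant_curve_lift_iff[of \<gamma>h \<gamma>, OF lift] nonconst
        lift[of 0] lift[of 1]
      by (simp add: line_int_lift_N_square)
  qed
  ultimately show ?thesis
    unfolding p_weak_upper_gradient_def
    using measurable_case_option_restrict[OF E] zero_p_modulus_lift[OF p \<Gamma>] unfolding \<Gamma>h_def by blast
qed

lemma p_weak_upper_gradient_unlift: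
  assumes p: "0 < p" and g: "g \<in> borel_measurable (restrict_space \<mu> E)"
    and ug: "p_weak_upper_gradient (hat_d d a) (hat_mu d \<mu> a q) p
               (case_option 0 u) (case_option 0 (\<lambda>x. g x * ennreal ((N x)^2))) (Some ` E)"
  shows "p_weak_upper_gradient d \<mu> p u g E"
proof -
  obtain \<Gamma>h where \<Gamma>h: "zero_p_modulus (hat_d d a) (hat_mu d \<mu> a q) p \<Gamma>h"
    and ineq: "\<And>\<gamma>h. d_rectifiable (hat_d d a) \<gamma>h \<Longrightarrow> nonconstant_curve \<gamma>h \<Longrightarrow> \<gamma>h ` {0..1} \<subseteq> Some ` E \<Longrightarrow>
      \<gamma>h \<notin> \<Gamma>h \<Longrightarrow> ug_ineq (case_option 0 u (\<gamma>h 0)) (case_option 0 u (\<gamma>h 1))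
        (line_int (hat_d d a) (case_option 0 (\<lambda>x. g x * ennreal ((N x)^2))) \<gamma>h)"
    using ug unfolding p_weak_upper_gradient_def by blast
  have "ug_ineq (u (\<gamma> 0)) (u (\<gamma> 1)) (line_int d g \<gamma>)"
    if "d_rectifiable d \<gamma>" "nonconstant_curve \<gamma>" "\<gamma> ` {0..1} \<subseteq> E"
      "\<gamma> \<notin> {\<gamma>. d_rectifiable d \<gamma> \<and> (\<lambda>t. Some (\<gamma> t)) \<in> \<Gamma>h}" for \<gamma>
  proof -
    interpret lifted_curve d a \<gamma> "\<lambda>t. Some (\<gamma> t)" by (rule lifted_curve_intro) (use that in auto)
    show ?thesis
      using ineq[of "\<lambda>t. Some (\<gamma> t)"] hat_rect that nonconstant_curve_lift_iff[of "\<lambda>t. Some (\<gamma> t)" \<gamma>]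
      by (auto simp: line_int_lift_N_square)
  qed
  then show ?thesis
    unfolding p_weak_upper_gradient_def using g zero_p_modulus_unlift[OF p \<Gamma>h] by blast
qed

end

theorem corollary6p2:
  fixes d :: "'a \<Rightarrow> 'a \<Rightarrow> real" and \<mu> :: "'a measure" and a :: 'a
    and p s Cs q :: real
    and E :: "'a set" and u :: "'a \<Rightarrow> ereal" and g :: "'a \<Rightarrow> ennreal"
  assumes p: "1 \<le> p"
    and metric: "metric_on d" and complete: "metric_complete d"
    and unbounded: "unbounded_metric d"
    and meas: "good_borel_measure d \<mu>"
    and doubling: "doubling d \<mu>" and PI: "poincare d \<mu> p"
    and s: "0 < s" and Cs: "0 < Cs" and growth: "lower_mass_bound d \<mu> a s Cs"
    and annular: "annularly_connected_large d a"
    and q: "q > s"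
    and E: "E \<in> sets \<mu>"
    and g_meas: "g \<in> borel_measurable (restrict_space \<mu> E)"
  shows "p_weak_upper_gradient d \<mu> p u g E \<longleftrightarrow>
         p_weak_upper_gradient (hat_d d a) (hat_mu d \<mu> a q) p
           (\<lambda>z. case z of Some x \<Rightarrow> u x | None \<Rightarrow> 0)
           (\<lambda>z. case z of Some x \<Rightarrow> g x * ennreal ((1 + d x a)\<^sup>2) | None \<Rightarrow> 0)
           (Some ` E)"
proof -
  interpret sphericalized_measure d a \<mu> q
    using metric meas by unfold_locales (auto simp: good_borel_measure_def)
  have "0 < p" using p by simp
  moreover have "(\<lambda>z. case z of Some x \<Rightarrow> u x | None \<Rightarrow> 0) = case_option 0 u"
    and "(\<lambda>z. case z of Some x \<Rightarrow> g x * ennreal ((1 + d x a)\<^sup>2) | None \<Rightarrow> 0)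
      = case_option 0 (\<lambda>x. g x * ennreal ((N x)^2))"
    by (auto simp: N_def split: option.split)
  ultimately show ?thesis
    using p_weak_upper_gradient_lift[OF _ E] p_weak_upper_gradient_unlift[OF _ g_meas] by metis
qed

end
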